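(* Under the standing assumptions, $\mathbf l_j=Q_{2,j}^*(a)\,\widehat H_{2,j}^{-1}\,Q_{2,j}(a)$ for $0\le j\le n-1$ and $\mathbf m_j=\Gamma_{1,j}^*(a)\,\widehat K_{1,j}^{-1}\,\Gamma_{1,j}(a)$ for $0\le j\le n$; moreover all $\mathbf l_j$ ($0\le j\le n-1$) and $\mathbf m_j$ ($0\le j\le n$) are positive definite matrices.
   Context: Let $q,n\in\mathbb N$ and let $a<b$ be real numbers. All matrices are complex; $I_q$, $0_q$ are the $q\times q$ identity and zero matrices. Let $s_0,\dots,s_{2n+1}$ be Hermitian $q\times q$ matrices and set $\widehat s_j:=-ab\,s_j+(a+b)s_{j+1}-s_{j+2}$. Define $H_{1,j}:=(s_{l+k})_{l,k=0}^j$, $H_{2,j}:=(\widehat s_{l+k})_{l,k=0}^{j}$, $K_{1,j}:=(bs_{l+k}-s_{l+k+1})_{l,k=0}^{j}$, $K_{2,j}:=(-as_{l+k}+s_{l+k+1})_{l,k=0}^j$. Standing assumption: $H_{1,n},H_{2,n-1},K_{1,n},K_{2,n}$ are positive definite. Let $T_0:=0_q$ and, for $j\ge1$, let $T_j$ be the $(j+1)\times(j+1)$ block matrix (blocks $q\times q$) with $I_q$ in block positions $(l+1,l)$, $l=0,\dots,j-1$, and $0_q$ elsewhere; $R_j(z):=(I_{(j+1)q}-zT_j)^{-1}$; $v_j:=\mathrm{col}(I_q,0_q,\dots,0_q)\in\mathbb C^{(j+1)q\times q}$. Let $u_{2,0}:=-(a+b)s_0+s_1$, $u_{2,j}:=\mathrm{col}(u_{2,0},-\widehat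 s_0,\dots,-\widehat s_{j-1})$; for $j\ge1$, $Y_{2,j}:=\mathrm{col}(\widehat s_j,\dots,\widehat s_{2j-1})$, $\widetilde Y_{1,j}:=\mathrm{col}(bs_j-s_{j+1},\dots,bs_{2j-1}-s_{2j})$. Schur complements: $\widehat H_{2,0}:=\widehat s_0$, $\widehat H_{2,j}:=\widehat s_{2j}-Y_{2,j}^*H_{2,j-1}^{-1}Y_{2,j}$; $\widehat K_{1,0}:=bs_0-s_1$, $\widehat K_{1,j}:=bs_{2j}-s_{2j+1}-\widetilde Y_{1,j}^*K_{1,j-1}^{-1}\widetilde Y_{1,j}$. Polynomials: $Q_{2,0}(z):=-(u_{2,0}+zs_0)$, $\Gamma_{1,0}:=I_q$; for $j\ge1$: $Q_{2,j}(z):=-(-Y_{2,j}^*H_{2,j-1}^{-1},I_q)R_j(z)(u_{2,j}+zv_js_0)$, $\Gamma_{1,j}(z):=(-\widetilde Y_{1,j}^*K_{1,j-1}^{-1},I_q)R_j(z)v_j$. Dyukarev–Stieltjes matrix (DSM) parameters: let $\lambda_j:=(u_{2,j}+av_js_0)^*R_j^*(a)H_{2,j}^{-1}R_j(a)(u_{2,j}+av_js_0)$ ($0\le j\le n-1$) and $\mu_j:=v_j^*R_j^*(a)K_{1,j}^{-1}R_j(a)v_j$ ($0\le j\le n$). Set $\mathbf l_{-1}:=s_0$, $\mathbf l_0:=\lambda_0$, $\mathbf l_j:=\lambda_j-\lambda_{j-1}$ ($1\le j\le n-1$), and $\mathbf m_0:=\mu_0=(bs_0-s_1)^{-1}$,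 $\mathbf m_j:=\mu_j-\mu_{j-1}$ ($1\le j\le n$). *)

theory Defs
  imports "Jordan_Normal_Form.Schur_Decomposition"
begin

text \<open>Block matrices are represented as JNF matrices over complex numbers.
  A block matrix with r block rows and c block columns, all blocks of size q x q,
  whose block (l,k) is f l k.\<close>

definition blockmat :: "nat \<Rightarrow> nat \<Rightarrow> nat \<Rightarrow> (nat \<Rightarrow> nat \<Rightarrow> complex mat) \<Rightarrow> complex mat" where
  "blockmat q r c f = mat (r*q) (c*q) (\<lambda>(i,k). f (i div q) (k div q) $$ (i mod q, k mod q))"

definition rowcat :: "complex mat \<Rightarrow> complex mat \<Rightarrow> complex mat" where
  "rowcat A B = mat (dim_row A) (dim_col A + dim_col B)
     (\<lambda>(i,k). if k < dim_col A then A $$ (i,k) else B $$ (i, k - dim_col A))"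

text \<open>Inverse of a square matrix (unspecified if not invertible).\<close>
definition minv :: "complex mat \<Rightarrow> complex mat" where
  "minv A = (SOME B. B \<in> carrier_mat (dim_row A) (dim_row A) \<and> A * B = 1\<^sub>m (dim_row A)
                     \<and> B * A = 1\<^sub>m (dim_row A))"

definition hermitian :: "complex mat \<Rightarrow> bool" where
  "hermitian A \<longleftrightarrow> square_mat A \<and> mat_adjoint A = A"

definition pos_def :: "complex mat \<Rightarrow> bool" where
  "pos_def A \<longleftrightarrow> hermitian A \<and>
     (\<forall>v \<in> carrier_vec (dim_row A). v \<noteq> 0\<^sub>v (dim_row A) \<longrightarrow>
        (let x = conjugate v \<bullet> (A *\<^sub>v v) in Im x = 0 \<and> Re x > 0))"

definition shat :: "real \<Rightarrow> real \<Rightarrow> (nat \<Rightarrow> complex mat) \<Rightarrow> nat \<Rightarrow> complex mat" where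
  "shat a b s j = (- complex_of_real (a*b)) \<cdot>\<^sub>m s j + complex_of_real (a+b) \<cdot>\<^sub>m s (j+1) - s (j+2)"

definition hankel :: "nat \<Rightarrow> (nat \<Rightarrow> complex mat) \<Rightarrow> nat \<Rightarrow> complex mat" where
  "hankel q f j = blockmat q (j+1) (j+1) (\<lambda>l k. f (l+k))"

definition H1 :: "nat \<Rightarrow> (nat \<Rightarrow> complex mat) \<Rightarrow> nat \<Rightarrow> complex mat" where
  "H1 q s j = hankel q s j"
definition H2 :: "nat \<Rightarrow> real \<Rightarrow> real \<Rightarrow> (nat \<Rightarrow> complex mat) \<Rightarrow> nat \<Rightarrow> complex mat" where
  "H2 q a b s j = hankel q (shat a b s) j"
definition K1 :: "nat \<Rightarrow> real \<Rightarrow> (nat \<Rightarrow> complex mat) \<Rightarrow> nat \<Rightarrow> complex mat" where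
  "K1 q b s j = hankel q (\<lambda>i. complex_of_real b \<cdot>\<^sub>m s i - s (i+1)) j"
definition K2 :: "nat \<Rightarrow> real \<Rightarrow> (nat \<Rightarrow> complex mat) \<Rightarrow> nat \<Rightarrow> complex mat" where
  "K2 q a s j = hankel q (\<lambda>i. - (complex_of_real a \<cdot>\<^sub>m s i) + s (i+1)) j"

definition Tm :: "nat \<Rightarrow> nat \<Rightarrow> complex mat" where
  "Tm q j = blockmat q (j+1) (j+1) (\<lambda>l k. if l = k+1 then 1\<^sub>m q else 0\<^sub>m q q)"

definition Rm :: "nat \<Rightarrow> nat \<Rightarrow> complex \<Rightarrow> complex mat" where
  "Rm q j z = minv (1\<^sub>m ((j+1)*q) - z \<cdot>\<^sub>m Tm q j)"

definition vv :: "nat \<Rightarrow> nat \<Rightarrow> complex mat" where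
  "vv q j = blockmat q (j+1) 1 (\<lambda>l k. if l = 0 then 1\<^sub>m q else 0\<^sub>m q q)"

definition u20 :: "real \<Rightarrow> real \<Rightarrow> (nat \<Rightarrow> complex mat) \<Rightarrow> complex mat" where
  "u20 a b s = (- complex_of_real (a+b)) \<cdot>\<^sub>m s 0 + s 1"

definition u2 :: "nat \<Rightarrow> real \<Rightarrow> real \<Rightarrow> (nat \<Rightarrow> complex mat) \<Rightarrow> nat \<Rightarrow> complex mat" where
  "u2 q a b s j = blockmat q (j+1) 1
     (\<lambda>l k. if l = 0 then u20 a b s else - shat a b s (l - 1))"

definition Y2 :: "nat \<Rightarrow> real \<Rightarrow> real \<Rightarrow> (nat \<Rightarrow> complex mat) \<Rightarrow> nat \<Rightarrow> complex mat" where
  "Y2 q a b s j = blockmat q j 1 (\<lambda>l k. shat a b s (j+l))"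

definition Yt1 :: "nat \<Rightarrow> real \<Rightarrow> (nat \<Rightarrow> complex mat) \<Rightarrow> nat \<Rightarrow> complex mat" where
  "Yt1 q b s j = blockmat q j 1 (\<lambda>l k. complex_of_real b \<cdot>\<^sub>m s (j+l) - s (j+l+1))"

definition H2hat :: "nat \<Rightarrow> real \<Rightarrow> real \<Rightarrow> (nat \<Rightarrow> complex mat) \<Rightarrow> nat \<Rightarrow> complex mat" where
  "H2hat q a b s j = (if j = 0 then shat a b s 0 else
     shat a b s (2*j) - mat_adjoint (Y2 q a b s j) * minv (H2 q a b s (j-1)) * Y2 q a b s j)"

definition K1hat :: "nat \<Rightarrow> real \<Rightarrow> (nat \<Rightarrow> complex mat) \<Rightarrow> nat \<Rightarrow> complex mat" where
  "K1hat q b s j = (if j = 0 then complex_of_real b \<cdot>\<^sub>m s 0 - s 1 else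
     complex_of_real b \<cdot>\<^sub>m s (2*j) - s (2*j+1)
       - mat_adjoint (Yt1 q b s j) * minv (K1 q b s (j-1)) * Yt1 q b s j)"

definition Q2 :: "nat \<Rightarrow> real \<Rightarrow> real \<Rightarrow> (nat \<Rightarrow> complex mat) \<Rightarrow> nat \<Rightarrow> complex \<Rightarrow> complex mat" where
  "Q2 q a b s j z = (if j = 0 then - (u20 a b s + z \<cdot>\<^sub>m s 0) else
     - (rowcat (- (mat_adjoint (Y2 q a b s j) * minv (H2 q a b s (j-1)))) (1\<^sub>m q)
          * Rm q j z * (u2 q a b s j + z \<cdot>\<^sub>m (vv q j * s 0))))"

definition Gamma1 :: "nat \<Rightarrow> real \<Rightarrow> (nat \<Rightarrow> complex mat) \<Rightarrow> nat \<Rightarrow> complex \<Rightarrow> complex mat" where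
  "Gamma1 q b s j z = (if j = 0 then 1\<^sub>m q else
     rowcat (- (mat_adjoint (Yt1 q b s j) * minv (K1 q b s (j-1)))) (1\<^sub>m q)
          * Rm q j z * vv q j)"

definition lam :: "nat \<Rightarrow> real \<Rightarrow> real \<Rightarrow> (nat \<Rightarrow> complex mat) \<Rightarrow> nat \<Rightarrow> complex mat" where
  "lam q a b s j = (let w = u2 q a b s j + complex_of_real a \<cdot>\<^sub>m (vv q j * s 0);
                        R = Rm q j (complex_of_real a) in
     mat_adjoint w * mat_adjoint R * minv (H2 q a b s j) * R * w)"

definition mu :: "nat \<Rightarrow> real \<Rightarrow> real \<Rightarrow> (nat \<Rightarrow> complex mat) \<Rightarrow> nat \<Rightarrow> complex mat" where
  "mu q a b s j = (let R = Rm q j (complex_of_real a) in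
     mat_adjoint (vv q j) * mat_adjoint R * minv (K1 q b s j) * R * vv q j)"

definition lpar :: "nat \<Rightarrow> real \<Rightarrow> real \<Rightarrow> (nat \<Rightarrow> complex mat) \<Rightarrow> nat \<Rightarrow> complex mat" where
  "lpar q a b s j = (if j = 0 then lam q a b s 0 else lam q a b s j - lam q a b s (j-1))"

definition mpar :: "nat \<Rightarrow> real \<Rightarrow> real \<Rightarrow> (nat \<Rightarrow> complex mat) \<Rightarrow> nat \<Rightarrow> complex mat" where
  "mpar q a b s j = (if j = 0 then mu q a b s 0 else mu q a b s j - mu q a b s (j-1))"

end

(*
  Write c_i = b s_i - s_(i+1) (cseq below): K_(1,j) is the block Hankel matrix of (c_i), and
  \hat s_m = c_(m+1) - a c_m.  Since R_j(a) inverts I - a T_j, one finds R_j(a) v_j = col(a^l I) and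
  R_j(a) (u_(2,j) + a v_j s_0) = -col(c_0, ..., c_j).  Hence lambda_j and mu_j are quadratic forms
  x^* M^-1 x of block columns x in M = H_(2,j) resp. M = K_(1,j).  Splitting off the last block row
  and column of M, the block inverse formula gives lambda_j - lambda_(j-1) = g^* S^-1 g, where the
  Schur complement S is \hat H_(2,j) and the residual g = x_2 - B^* A^-1 x_1 is Q_(2,j)(a); likewise
  for mu_j with \hat K_(1,j) and Gamma_(1,j)(a).  Positivity follows because S is positive definite
  and g is injective: via \hat s_m = c_(m+1) - a c_m, a kernel vector of Q_(2,j)(a) yields a kernel
  vector of K_(1,j) (shifting block columns), and one of Gamma_(1,j)(a) a kernel vector of
  H_(2,j-1) (shifting block rows).
*)

theory Submission
  imports Defs
begin

lemma sum_lessThan_add: "(\<Sum>t<m + (n :: nat). f t) = (\<Sum>t<m. f t) + (\<Sum>t<n. f (m + t))"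
  by (induction n) (simp_all add: add.assoc)

lemma scalar_prod_split:
  assumes "v \<in> carrier_vec (n1 + n2)" "w \<in> carrier_vec (n1 + n2)"
  shows "v \<bullet> w = (\<Sum>t<n1. v $ t * w $ t) + (\<Sum>t<n2. v $ (n1 + t) * w $ (n1 + t))"
  using assms by (simp add: scalar_prod_def lessThan_atLeast0[symmetric] sum_lessThan_add)

lemma vec_eq_if_minus_eq_zero:
  assumes "(v :: 'a :: ab_group_add vec) \<in> carrier_vec n" "w \<in> carrier_vec n" "v - w = 0\<^sub>v n"
  shows "v = w"
proof (rule eq_vecI)
  fix i
  assume "i < dim_vec w"
  then show "v $ i = w $ i"
    using arg_cong[OF assms(3), of "\<lambda>x. x $ i"] assms(1,2) by simp
qed (use assms in simp)

lemma mult_mat_vec_zero [simp]: "A \<in> carrier_mat n m \<Longrightarrow> A *\<^sub>v 0\<^sub>v m = (0\<^sub>v n :: 'a :: semiring_0 vec)"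
  by (rule eq_vecI) auto

lemma mult_mat_vec_uminus:
  assumes "(A :: 'a :: ring mat) \<in> carrier_mat n m" "v \<in> carrier_vec m"
  shows "A *\<^sub>v (- v) = - (A *\<^sub>v v)"
  by (rule eq_vecI, insert assms) auto

lemma conjugate_append_vec [simp]:
  "conjugate (v @\<^sub>v w) = conjugate v @\<^sub>v (conjugate w :: 'a :: conjugatable_ring vec)"
  by (rule eq_vecI) auto

lemma append_vec_eq_zero_iff:
  assumes "v \<in> carrier_vec n1" "w \<in> carrier_vec n2"
  shows "v @\<^sub>v w = 0\<^sub>v (n1 + n2) \<longleftrightarrow> v = 0\<^sub>v n1 \<and> w = 0\<^sub>v n2"
proof -
  have "0\<^sub>v (n1 + n2) = 0\<^sub>v n1 @\<^sub>v (0\<^sub>v n2 :: 'a :: zero vec)"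
    by (rule eq_vecI) auto
  then show ?thesis
    using assms by simp
qed

lemma minus_add_swap_mat:
  assumes "(P :: 'a :: ab_group_add mat) \<in> carrier_mat n m" "Q \<in> carrier_mat n m" "R \<in> carrier_mat n m"
  shows "P - Q + R = P + (R - Q)"
  by (rule eq_matI, insert assms) auto

lemma add_diff_cancel_left_mat:
  assumes "(P :: 'a :: ab_group_add mat) \<in> carrier_mat n m" "Q \<in> carrier_mat n m"
  shows "P + Q - P = Q"
  by (rule eq_matI, insert assms) auto

lemma dim_mat_adjoint [simp]:
  "dim_row (mat_adjoint A) = dim_col A" "dim_col (mat_adjoint A) = dim_row A"
  unfolding mat_adjoint_def by (auto simp: mat_of_rows_def)

lemma index_mat_adjoint [simp]:
  "i < dim_col A \<Longrightarrow> j < dim_row A \<Longrightarrow> mat_adjoint A $$ (i, j) = cnj (A $$ (j, i))"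
  unfolding mat_adjoint_def by (auto simp: mat_of_rows_def)

lemma mat_adjoint_carrier [simp, intro]: "A \<in> carrier_mat n m \<Longrightarrow> mat_adjoint A \<in> carrier_mat m n"
  unfolding carrier_mat_def by simp

lemma mat_adjoint_adjoint [simp]: "mat_adjoint (mat_adjoint (A :: complex mat)) = A"
  by (rule eq_matI) auto

lemma mat_adjoint_mult:
  assumes "(A :: complex mat) \<in> carrier_mat n m" "B \<in> carrier_mat m k"
  shows "mat_adjoint (A * B) = mat_adjoint B * mat_adjoint A"
  by (rule eq_matI, insert assms)
    (auto simp: scalar_prod_def mult.commute intro!: sum.cong)

lemma mat_adjoint_minus:
  assumes "(A :: complex mat) \<in> carrier_mat n m" "B \<in> carrier_mat n m"
  shows "mat_adjoint (A - B) = mat_adjoint A - mat_adjoint B"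
  by (rule eq_matI, insert assms) auto

lemma mat_adjoint_uminus: "mat_adjoint (- (A :: complex mat)) = - mat_adjoint A"
  by (rule eq_matI) auto

lemma mat_adjoint_one [simp]: "mat_adjoint (1\<^sub>m n :: complex mat) = 1\<^sub>m n"
  by (rule eq_matI) auto

lemma hermitian_index:
  assumes "(A :: complex mat) \<in> carrier_mat n n" "mat_adjoint A = A" "x < n" "y < n"
  shows "cnj (A $$ (x, y)) = A $$ (y, x)"
  by (metis assms carrier_matD index_mat_adjoint)

lemma hermitianD: "hermitian A \<Longrightarrow> A \<in> carrier_mat (dim_row A) (dim_row A)"
  "hermitian A \<Longrightarrow> mat_adjoint A = A"
  unfolding hermitian_def square_mat.simps carrier_mat_def by auto

lemma adjoint_congruence_carrier:
  "G \<in> carrier_mat n m \<Longrightarrow> P \<in> carrier_mat n n \<Longrightarrow> mat_adjoint G * P * G \<in> carrier_mat m m"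
  by (metis mat_adjoint_carrier mult_carrier_mat)

lemma adjoint_congruence_hermitian:
  assumes "(P :: complex mat) \<in> carrier_mat n n" "G \<in> carrier_mat n m" "mat_adjoint P = P"
  shows "mat_adjoint (mat_adjoint G * P * G) = mat_adjoint G * P * G"
proof -
  have "mat_adjoint (mat_adjoint G * P * G) = mat_adjoint G * mat_adjoint (mat_adjoint G * P)"
    by (rule mat_adjoint_mult[of _ m n _ m]) (use assms in auto)
  also have "mat_adjoint (mat_adjoint G * P) = P * G"
    using mat_adjoint_mult[of "mat_adjoint G" m n P n] assms by auto
  finally show ?thesis
    using assms by (simp add: assoc_mult_mat[of _ m n _ n _ m])
qed

lemma scalar_prod_mat_adjoint:
  assumes G: "(G :: complex mat) \<in> carrier_mat m n" and v: "v \<in> carrier_vec n"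
    and w: "w \<in> carrier_vec m"
  shows "conjugate v \<bullet> (mat_adjoint G *\<^sub>v w) = conjugate (G *\<^sub>v v) \<bullet> w"
proof -
  have "conjugate v \<bullet> (mat_adjoint G *\<^sub>v w) = (\<Sum>i<n. \<Sum>k<m. cnj (v$i) * (cnj (G$$(k,i)) * w$k))"
    using G v w by (auto simp: scalar_prod_def lessThan_atLeast0 sum_distrib_left intro!: sum.cong)
  also have "\<dots> = (\<Sum>k<m. (\<Sum>i<n. cnj (G$$(k,i)) * cnj (v$i)) * w$k)"
    by (subst sum.swap) (simp add: sum_distrib_left sum_distrib_right mult_ac)
  also have "\<dots> = conjugate (G *\<^sub>v v) \<bullet> w"
    using G v w by (auto simp: scalar_prod_def lessThan_atLeast0 intro!: sum.cong)
  finally show ?thesis .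
qed

lemma congruence_uminus:
  assumes "(G :: complex mat) \<in> carrier_mat n m" "P \<in> carrier_mat n n"
  shows "mat_adjoint (- G) * P * (- G) = mat_adjoint G * P * G"
  using assms by (simp add: mat_adjoint_uminus)

lemma adjoint_mult_congruence:
  assumes R: "(R :: complex mat) \<in> carrier_mat N N" and w: "w \<in> carrier_mat N m" and P: "P \<in> carrier_mat N N"
  shows "mat_adjoint w * mat_adjoint R * P * R * w = mat_adjoint (R * w) * P * (R * w)"
  using assoc_mult_mat[OF mult_carrier_mat[OF mat_adjoint_carrier[OF mult_carrier_mat[OF R w]] P] R w]
    mat_adjoint_mult[OF R w] by simp

lemma minv_correct:
  assumes A: "(A :: complex mat) \<in> carrier_mat n n" and "det A \<noteq> 0"
  shows "minv A \<in> carrier_mat n n" "A * minv A = 1\<^sub>m n" "minv A * A = 1\<^sub>m n"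
proof -
  from det_non_zero_imp_unit[OF assms, of "()"] obtain B
    where "B \<in> carrier_mat n n" "B * A = 1\<^sub>m n" "A * B = 1\<^sub>m n"
    unfolding Units_def ring_mat_def by auto
  then have "\<exists>B. B \<in> carrier_mat (dim_row A) (dim_row A) \<and> A * B = 1\<^sub>m (dim_row A)
               \<and> B * A = 1\<^sub>m (dim_row A)"
    using A by auto
  from someI_ex[OF this] A
  show "minv A \<in> carrier_mat n n" "A * minv A = 1\<^sub>m n" "minv A * A = 1\<^sub>m n"
    unfolding minv_def by auto
qed

lemma minv_mult_cancel:
  assumes A: "(A :: complex mat) \<in> carrier_mat n n" "det A \<noteq> 0" and X: "X \<in> carrier_mat n m"
  shows "minv A * (A * X) = X" "A * (minv A * X) = X"
proof -
  note Ai = minv_correct[OF A]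
  show "minv A * (A * X) = X"
    using assoc_mult_mat[OF Ai(1) A(1) X] Ai(3) X by simp
  show "A * (minv A * X) = X"
    using assoc_mult_mat[OF A(1) Ai(1) X] Ai(2) X by simp
qed

lemma minv_hermitian:
  assumes A: "(A :: complex mat) \<in> carrier_mat n n" "det A \<noteq> 0" and h: "mat_adjoint A = A"
  shows "mat_adjoint (minv A) = minv A"
proof -
  note Ai = minv_correct[OF A]
  have "mat_adjoint (minv A) * A = 1\<^sub>m n"
    using mat_adjoint_mult[OF A(1) Ai(1)] Ai(2) h by simp
  have "mat_adjoint (minv A) = mat_adjoint (minv A) * (A * minv A)"
    using Ai by simp
  also have "\<dots> = mat_adjoint (minv A) * A * minv A"
    using Ai A by (simp add: assoc_mult_mat[of _ n n _ n _ n])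
  finally show ?thesis
    using \<open>mat_adjoint (minv A) * A = 1\<^sub>m n\<close> Ai by simp
qed

lemma pos_defI:
  assumes "A \<in> carrier_mat n n" "mat_adjoint A = A"
    and "\<And>v. v \<in> carrier_vec n \<Longrightarrow> v \<noteq> 0\<^sub>v n \<Longrightarrow>
           Im (conjugate v \<bullet> (A *\<^sub>v v)) = 0 \<and> 0 < Re (conjugate v \<bullet> (A *\<^sub>v v))"
  shows "pos_def A"
  using assms unfolding pos_def_def hermitian_def Let_def by auto

lemma pos_defD:
  assumes "pos_def A" "A \<in> carrier_mat n n"
  shows "mat_adjoint A = A"
    and "v \<in> carrier_vec n \<Longrightarrow> v \<noteq> 0\<^sub>v n \<Longrightarrow>
           Im (conjugate v \<bullet> (A *\<^sub>v v)) = 0 \<and> 0 < Re (conjugate v \<bullet> (A *\<^sub>v v))"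
  using assms unfolding pos_def_def hermitian_def Let_def by auto

lemma pos_def_mult_vec_eq_zero:
  assumes "pos_def A" "A \<in> carrier_mat n n" "v \<in> carrier_vec n" "A *\<^sub>v v = 0\<^sub>v n"
  shows "v = 0\<^sub>v n"
proof (rule ccontr)
  assume "v \<noteq> 0\<^sub>v n"
  with pos_defD(2)[OF assms(1-3)] have "0 < Re (conjugate v \<bullet> (A *\<^sub>v v))"
    by blast
  moreover have "conjugate v \<bullet> (A *\<^sub>v v) = 0"
    using assms(3,4) by simp
  ultimately show False
    by simp
qed

lemma pos_def_mult_vec_inj:
  assumes "pos_def A" "(A :: complex mat) \<in> carrier_mat n n" "v \<in> carrier_vec n" "w \<in> carrier_vec n"
    and "A *\<^sub>v v = A *\<^sub>v w"
  shows "v = w"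
proof -
  have "A *\<^sub>v (v - w) = 0\<^sub>v n"
    using assms(5) mult_minus_distrib_mat_vec[OF assms(2,3,4)] assms(2,4) by simp
  then have "v - w = 0\<^sub>v n"
    using pos_def_mult_vec_eq_zero[OF assms(1,2)] assms(3,4) by simp
  then show ?thesis
    using vec_eq_if_minus_eq_zero assms(3,4) by blast
qed

lemma pos_def_det:
  assumes "pos_def A" "(A :: complex mat) \<in> carrier_mat n n"
  shows "det A \<noteq> 0"
  using pos_def_mult_vec_eq_zero[OF assms] det_0_iff_vec_prod_zero_field[OF assms(2)] by blast

lemma pos_def_minv:
  assumes pd: "pos_def A" and A: "(A :: complex mat) \<in> carrier_mat n n"
  shows "pos_def (minv A)"
proof -
  note Ai = minv_correct[OF A pos_def_det[OF assms]]
  show ?thesis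
  proof (rule pos_defI[OF Ai(1) minv_hermitian[OF A pos_def_det[OF assms] pos_defD(1)[OF assms]]])
    fix v :: "complex vec"
    assume v: "v \<in> carrier_vec n" "v \<noteq> 0\<^sub>v n"
    define w where "w = minv A *\<^sub>v v"
    have w: "w \<in> carrier_vec n"
      using Ai v unfolding w_def by simp
    have Aw: "A *\<^sub>v w = v"
      unfolding w_def using Ai A v by (metis assoc_mult_mat_vec one_mult_mat_vec)
    then have "w \<noteq> 0\<^sub>v n"
      using v A by auto
    moreover have "conjugate v \<bullet> (minv A *\<^sub>v v) = conjugate w \<bullet> (A *\<^sub>v w)"
      using scalar_prod_mat_adjoint[OF A w w] pos_defD(1)[OF assms] Aw w_def by simp
    ultimately show "Im (conjugate v \<bullet> (minv A *\<^sub>v v)) = 0 \<and> 0 < Re (conjugate v \<bullet> (minv A *\<^sub>v v))"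
      using pos_defD(2)[OF assms w] by simp
  qed
qed

lemma pos_def_minv_carrier:
  "pos_def A \<Longrightarrow> (A :: complex mat) \<in> carrier_mat n n \<Longrightarrow> minv A \<in> carrier_mat n n"
  using minv_correct(1) pos_def_det by blast

lemma pos_def_congruence:
  assumes pd: "pos_def P" and P: "P \<in> carrier_mat n n" and G: "G \<in> carrier_mat n m"
    and inj: "\<And>v. v \<in> carrier_vec m \<Longrightarrow> G *\<^sub>v v = 0\<^sub>v n \<Longrightarrow> v = 0\<^sub>v m"
  shows "pos_def (mat_adjoint G * P * G)"
proof (rule pos_defI)
  show "mat_adjoint G * P * G \<in> carrier_mat m m"
    using P G by auto
  show "mat_adjoint (mat_adjoint G * P * G) = mat_adjoint G * P * G"
    by (rule adjoint_congruence_hermitian[OF P G pos_defD(1)[OF pd P]])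
next
  fix v :: "complex vec"
  assume v: "v \<in> carrier_vec m" "v \<noteq> 0\<^sub>v m"
  have Gv: "G *\<^sub>v v \<in> carrier_vec n" "G *\<^sub>v v \<noteq> 0\<^sub>v n"
    using G v inj by auto
  have "conjugate v \<bullet> ((mat_adjoint G * P * G) *\<^sub>v v) = conjugate v \<bullet> (mat_adjoint G *\<^sub>v (P *\<^sub>v (G *\<^sub>v v)))"
    using assoc_mult_mat_vec[OF mult_carrier_mat[OF mat_adjoint_carrier[OF G] P] G v(1)]
      assoc_mult_mat_vec[OF mat_adjoint_carrier[OF G] P Gv(1)] by simp
  also have "\<dots> = conjugate (G *\<^sub>v v) \<bullet> (P *\<^sub>v (G *\<^sub>v v))"
    using scalar_prod_mat_adjoint[OF G v(1)] P Gv by simp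
  finally show "Im (conjugate v \<bullet> ((mat_adjoint G * P * G) *\<^sub>v v)) = 0
      \<and> 0 < Re (conjugate v \<bullet> ((mat_adjoint G * P * G) *\<^sub>v v))"
    using pos_defD(2)[OF pd P Gv] by simp
qed

section \<open>Block matrices and Schur complements\<close>

lemma index_append_rows [simp]:
  "dim_row (A @\<^sub>r B) = dim_row A + dim_row B" "dim_col (A @\<^sub>r B) = dim_col A"
  "i < dim_row A + dim_row B \<Longrightarrow> k < dim_col A \<Longrightarrow>
     (A @\<^sub>r B) $$ (i, k) = (if i < dim_row A then A $$ (i, k) else B $$ (i - dim_row A, k))"
  unfolding append_rows_def by auto

lemma index_rowcat [simp]:
  "dim_row (rowcat P Q) = dim_row P" "dim_col (rowcat P Q) = dim_col P + dim_col Q"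
  "i < dim_row P \<Longrightarrow> k < dim_col P + dim_col Q \<Longrightarrow>
     rowcat P Q $$ (i, k) = (if k < dim_col P then P $$ (i, k) else Q $$ (i, k - dim_col P))"
  unfolding rowcat_def by auto

lemma rowcat_carrier [simp, intro]:
  "P \<in> carrier_mat m n1 \<Longrightarrow> Q \<in> carrier_mat m n2 \<Longrightarrow> rowcat P Q \<in> carrier_mat m (n1 + n2)"
  unfolding carrier_mat_def by simp

lemma mat_adjoint_append_rows:
  assumes "X \<in> carrier_mat n1 m" "Y \<in> carrier_mat n2 m"
  shows "mat_adjoint (X @\<^sub>r Y) = rowcat (mat_adjoint X) (mat_adjoint Y)"
  by (rule eq_matI, insert assms) auto

lemma rowcat_mult_append_rows:
  assumes P: "P \<in> carrier_mat m n1" and Q: "Q \<in> carrier_mat m n2"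
    and X: "X \<in> carrier_mat n1 k" and Y: "Y \<in> carrier_mat n2 k"
  shows "rowcat P Q * (X @\<^sub>r Y) = P * X + Q * Y"
proof (rule eq_matI)
  fix i j
  assume "i < dim_row (P * X + Q * Y)" "j < dim_col (P * X + Q * Y)"
  then have ij: "i < m" "j < k"
    using P Q X Y by auto
  then show "(rowcat P Q * (X @\<^sub>r Y)) $$ (i, j) = (P * X + Q * Y) $$ (i, j)"
    using P Q X Y by (simp add: scalar_prod_split[of _ n1 n2]) (simp add: scalar_prod_def lessThan_atLeast0)
qed (use P Q X Y in auto)

lemma rowcat_uminus_one_mult:
  assumes "Z \<in> carrier_mat q N" "X \<in> carrier_mat N m" "Y \<in> carrier_mat q m"
  shows "rowcat (- Z) (1\<^sub>m q) * (X @\<^sub>r Y) = Y - Z * X"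
  using rowcat_mult_append_rows[of "- Z" q N "1\<^sub>m q" q X m Y] assms
  by (auto intro!: eq_matI)

lemma four_block_mult_append_rows:
  assumes A: "A \<in> carrier_mat r1 n1" and B: "B \<in> carrier_mat r1 n2"
    and C: "C \<in> carrier_mat r2 n1" and D: "D \<in> carrier_mat r2 n2"
    and X: "X \<in> carrier_mat n1 m" and Y: "Y \<in> carrier_mat n2 m"
  shows "four_block_mat A B C D * (X @\<^sub>r Y) = (A * X + B * Y) @\<^sub>r (C * X + D * Y)"
proof (rule eq_matI)
  fix i j
  assume "i < dim_row ((A * X + B * Y) @\<^sub>r (C * X + D * Y))"
    "j < dim_col ((A * X + B * Y) @\<^sub>r (C * X + D * Y))"
  then have ij: "i < r1 + r2" "j < m"
    using A B C D X Y by auto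
  then show "(four_block_mat A B C D * (X @\<^sub>r Y)) $$ (i, j) = ((A * X + B * Y) @\<^sub>r (C * X + D * Y)) $$ (i, j)"
    using A B C D X Y by (simp add: scalar_prod_split[of _ n1 n2]) (simp add: scalar_prod_def lessThan_atLeast0)
qed (use A B C D X Y in auto)

lemma pos_def_four_block:
  assumes A: "A \<in> carrier_mat N N" and B: "B \<in> carrier_mat N q" and D: "D \<in> carrier_mat q q"
    and pd: "pos_def (four_block_mat A B (mat_adjoint B) D)"
  shows "pos_def A" "mat_adjoint D = D"
proof -
  let ?M = "four_block_mat A B (mat_adjoint B) D"
  have M: "?M \<in> carrier_mat (N + q) (N + q)"
    using A D by simp
  have entry: "cnj (?M $$ (i, k)) = ?M $$ (k, i)" if "i < N + q" "k < N + q" for i k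
    using hermitian_index[OF M pos_defD(1)[OF pd M] that] .
  show "mat_adjoint D = D"
  proof (rule eq_matI)
    fix i k
    assume "i < dim_row D" "k < dim_col D"
    then show "mat_adjoint D $$ (i, k) = D $$ (i, k)"
      using entry[of "N + k" "N + i"] A B D by simp
  qed (use D in auto)
  have "mat_adjoint A = A"
  proof (rule eq_matI)
    fix i k
    assume "i < dim_row A" "k < dim_col A"
    then show "mat_adjoint A $$ (i, k) = A $$ (i, k)"
      using entry[of k i] A B D by simp
  qed (use A in auto)
  then show "pos_def A"
  proof (rule pos_defI[OF A])
    fix v :: "complex vec"
    assume v: "v \<in> carrier_vec N" "v \<noteq> 0\<^sub>v N"
    let ?y = "v @\<^sub>v 0\<^sub>v q"
    have y: "?y \<in> carrier_vec (N + q)" "?y \<noteq> 0\<^sub>v (N + q)"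
      using v append_vec_eq_zero_iff[OF v(1), of "0\<^sub>v q" q] by auto
    have "?M *\<^sub>v ?y = (A *\<^sub>v v) @\<^sub>v (mat_adjoint B *\<^sub>v v)"
      using four_block_mat_mult_vec[OF A B mat_adjoint_carrier[OF B] D v(1) zero_carrier_vec] A B D v
      by auto
    then have "conjugate ?y \<bullet> (?M *\<^sub>v ?y) = conjugate v \<bullet> (A *\<^sub>v v)"
      using scalar_prod_append[of "conjugate v" N "0\<^sub>v q" q "A *\<^sub>v v" "mat_adjoint B *\<^sub>v v"] A B v
        mult_mat_vec_carrier[OF mat_adjoint_carrier[OF B] v(1)]
      by auto
    then show "Im (conjugate v \<bullet> (A *\<^sub>v v)) = 0 \<and> 0 < Re (conjugate v \<bullet> (A *\<^sub>v v))"
      using pos_defD(2)[OF pd M y] by simp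
  qed
qed

lemma four_block_mult_schur_vec:
  assumes A: "A \<in> carrier_mat N N" "det A \<noteq> 0" and B: "B \<in> carrier_mat N q"
    and C: "C \<in> carrier_mat q N" and D: "D \<in> carrier_mat q q" and v: "v \<in> carrier_vec q"
  shows "four_block_mat A B C D *\<^sub>v ((- (minv A *\<^sub>v (B *\<^sub>v v))) @\<^sub>v v)
    = 0\<^sub>v N @\<^sub>v ((D - C * minv A * B) *\<^sub>v v)"
proof -
  note Ai = minv_correct[OF A]
  define w where "w = minv A *\<^sub>v (B *\<^sub>v v)"
  have w: "w \<in> carrier_vec N"
    using Ai B v unfolding w_def by auto
  have "A *\<^sub>v w = B *\<^sub>v v"
    unfolding w_def using Ai A B v by (metis assoc_mult_mat_vec one_mult_mat_vec mult_mat_vec_carrier)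
  then have top: "A *\<^sub>v (- w) + B *\<^sub>v v = 0\<^sub>v N"
    using mult_mat_vec_uminus[OF A(1) w] A B v by simp
  have X: "C * minv A * B \<in> carrier_mat q q"
    using C Ai B by auto
  have "(C * minv A * B) *\<^sub>v v = C *\<^sub>v w"
    unfolding w_def using assoc_mult_mat_vec[OF mult_carrier_mat[OF C Ai(1)] B v]
      assoc_mult_mat_vec[OF C Ai(1) mult_mat_vec_carrier[OF B v]] by simp
  then have "C *\<^sub>v (- w) + D *\<^sub>v v = (D - C * minv A * B) *\<^sub>v v"
    using minus_mult_distrib_mat_vec[OF D X v] mult_mat_vec_uminus[OF C w] C D v w
    by (auto intro!: eq_vecI)
  then show ?thesis
    using four_block_mat_mult_vec[OF A(1) B C D _ v, of "- w"] w top unfolding w_def by simp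
qed

lemma pos_def_schur_complement:
  assumes A: "A \<in> carrier_mat N N" and B: "B \<in> carrier_mat N q" and D: "D \<in> carrier_mat q q"
    and pd: "pos_def (four_block_mat A B (mat_adjoint B) D)"
  shows "pos_def (D - mat_adjoint B * minv A * B)"
proof -
  let ?M = "four_block_mat A B (mat_adjoint B) D" and ?X = "mat_adjoint B * minv A * B"
  have M: "?M \<in> carrier_mat (N + q) (N + q)"
    using A D by simp
  note pdA = pos_def_four_block(1)[OF A B D pd]
  note detA = pos_def_det[OF pdA A]
  note Ai = minv_correct[OF A detA]
  have X: "?X \<in> carrier_mat q q"
    using Ai B by auto
  have "mat_adjoint (D - ?X) = D - ?X"
    using mat_adjoint_minus[OF D X] pos_def_four_block(2)[OF A B D pd]
      adjoint_congruence_hermitian[OF Ai(1) B minv_hermitian[OF A detA pos_defD(1)[OF pdA A]]]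
    by simp
  then show ?thesis
  proof (rule pos_defI[OF minus_carrier_mat[OF X]])
    fix v :: "complex vec"
    assume v: "v \<in> carrier_vec q" "v \<noteq> 0\<^sub>v q"
    let ?w = "minv A *\<^sub>v (B *\<^sub>v v)"
    have w: "?w \<in> carrier_vec N"
      using Ai B v by auto
    have y: "(- ?w) @\<^sub>v v \<in> carrier_vec (N + q)" "(- ?w) @\<^sub>v v \<noteq> 0\<^sub>v (N + q)"
      using v w append_vec_eq_zero_iff[of "- ?w" N v q] by auto
    have "conjugate ((- ?w) @\<^sub>v v) \<bullet> (?M *\<^sub>v ((- ?w) @\<^sub>v v)) = conjugate v \<bullet> ((D - ?X) *\<^sub>v v)"
      unfolding four_block_mult_schur_vec[OF A detA B mat_adjoint_carrier[OF B] D v(1)]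
      using scalar_prod_append[of "conjugate (- ?w)" N "conjugate v" q "0\<^sub>v N" "(D - ?X) *\<^sub>v v"] w v
        mult_mat_vec_carrier[OF minus_carrier_mat[OF X] v(1)]
      by auto
    then show "Im (conjugate v \<bullet> ((D - ?X) *\<^sub>v v)) = 0 \<and> 0 < Re (conjugate v \<bullet> ((D - ?X) *\<^sub>v v))"
      using pos_defD(2)[OF pd M y] by simp
  qed
qed

lemma schur_complement_kernel:
  assumes A: "A \<in> carrier_mat N N" "det A \<noteq> 0" and B: "B \<in> carrier_mat N q"
    and C: "C \<in> carrier_mat q N" and D: "D \<in> carrier_mat q q"
    and x1: "x1 \<in> carrier_mat N m" and x2: "x2 \<in> carrier_mat q m" and v: "v \<in> carrier_vec m"
    and g: "(x2 - C * minv A * x1) *\<^sub>v v = 0\<^sub>v q"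
  shows "\<exists>w \<in> carrier_vec N. four_block_mat A B C D *\<^sub>v (w @\<^sub>v 0\<^sub>v q) = (x1 @\<^sub>r x2) *\<^sub>v v"
proof
  note Ai = minv_correct[OF A]
  define w where "w = minv A *\<^sub>v (x1 *\<^sub>v v)"
  show w: "w \<in> carrier_vec N"
    using Ai x1 v unfolding w_def by auto
  have "A *\<^sub>v w = x1 *\<^sub>v v"
    unfolding w_def using Ai A x1 v by (metis assoc_mult_mat_vec one_mult_mat_vec mult_mat_vec_carrier)
  moreover have "C *\<^sub>v w = x2 *\<^sub>v v"
  proof -
    have CAx: "C * minv A * x1 \<in> carrier_mat q m"
      using C Ai x1 by auto
    have "(C * minv A * x1) *\<^sub>v v = C *\<^sub>v w"
      unfolding w_def using assoc_mult_mat_vec[OF C mult_carrier_mat[OF Ai(1) x1] v]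
        assoc_mult_mat_vec[OF Ai(1) x1 v] C Ai x1 by simp
    moreover have "x2 *\<^sub>v v - (C * minv A * x1) *\<^sub>v v = 0\<^sub>v q"
      using g minus_mult_distrib_mat_vec[OF x2 CAx v] by simp
    ultimately show ?thesis
      using vec_eq_if_minus_eq_zero[of "x2 *\<^sub>v v" q "C *\<^sub>v w"] x2 C v w by simp
  qed
  ultimately show "four_block_mat A B C D *\<^sub>v (w @\<^sub>v 0\<^sub>v q) = (x1 @\<^sub>r x2) *\<^sub>v v"
    using four_block_mat_mult_vec[OF A(1) B C D w zero_carrier_vec] mat_mult_append[OF x1 x2 v] A B C D w
      x1 x2 v by simp
qed

lemma four_block_mult_solution:
  assumes A: "A \<in> carrier_mat N N" "det A \<noteq> 0" and B: "B \<in> carrier_mat N q"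
    and C: "C \<in> carrier_mat q N" and D: "D \<in> carrier_mat q q"
    and S: "det (D - C * minv A * B) \<noteq> 0"
    and x1: "x1 \<in> carrier_mat N m" and x2: "x2 \<in> carrier_mat q m"
  defines "Z \<equiv> minv (D - C * minv A * B) * (x2 - C * minv A * x1)"
  shows "four_block_mat A B C D * ((minv A * (x1 - B * Z)) @\<^sub>r Z) = x1 @\<^sub>r x2"
proof -
  note Ai = minv_correct[OF A]
  let ?S = "D - C * minv A * B" and ?g = "x2 - C * minv A * x1"
  have CAi: "C * minv A \<in> carrier_mat q N"
    using C Ai by auto
  have S': "?S \<in> carrier_mat q q"
    using D CAi B by (auto intro: minus_carrier_mat)
  have g: "?g \<in> carrier_mat q m"
    using x2 CAi x1 by (auto intro: minus_carrier_mat)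
  have Z: "Z \<in> carrier_mat q m"
    unfolding Z_def using minv_correct[OF S' S] g by auto
  have BZ: "B * Z \<in> carrier_mat N m"
    using B Z by auto
  have x1BZ: "x1 - B * Z \<in> carrier_mat N m"
    using BZ by (rule minus_carrier_mat)
  have "A * (minv A * (x1 - B * Z)) + B * Z = (x1 - B * Z) + B * Z"
    by (simp only: minv_mult_cancel(2)[OF A x1BZ])
  also have "\<dots> = x1"
    by (rule eq_matI) (use carrier_matD[OF x1] carrier_matD[OF BZ] in auto)
  finally have top: "A * (minv A * (x1 - B * Z)) + B * Z = x1" .
  have "C * (minv A * (x1 - B * Z)) = C * minv A * x1 - C * minv A * (B * Z)"
    using assoc_mult_mat[OF C Ai(1) x1BZ] mult_minus_distrib_mat[OF CAi x1 BZ] by simp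
  then have "C * (minv A * (x1 - B * Z)) + D * Z = C * minv A * x1 + (D * Z - C * minv A * B * Z)"
    using assoc_mult_mat[OF CAi B Z] CAi x1 B Z D by (auto intro!: eq_matI)
  also have "D * Z - C * minv A * B * Z = ?S * Z"
    using minus_mult_distrib_mat[OF D _ Z, of "C * minv A * B"] CAi B by auto
  also have "?S * Z = ?g"
    unfolding Z_def by (rule minv_mult_cancel(2)[OF S' S g])
  also have "C * minv A * x1 + ?g = x2"
    by (rule eq_matI) (use CAi x1 x2 in auto)
  finally have bottom: "C * (minv A * (x1 - B * Z)) + D * Z = x2" .
  show ?thesis
    using four_block_mult_append_rows[OF A(1) B C D mult_carrier_mat[OF Ai(1) x1BZ] Z] top bottom
    by simp
qed

lemma four_block_minv_mult:
  assumes A: "A \<in> carrier_mat N N" and B: "B \<in> carrier_mat N q" and D: "D \<in> carrier_mat q q"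
    and pd: "pos_def (four_block_mat A B (mat_adjoint B) D)"
    and x1: "x1 \<in> carrier_mat N m" and x2: "x2 \<in> carrier_mat q m"
  defines "Z \<equiv> minv (D - mat_adjoint B * minv A * B) * (x2 - mat_adjoint B * minv A * x1)"
  shows "minv (four_block_mat A B (mat_adjoint B) D) * (x1 @\<^sub>r x2) = (minv A * x1 - minv A * B * Z) @\<^sub>r Z"
    and "Z \<in> carrier_mat q m"
proof -
  let ?M = "four_block_mat A B (mat_adjoint B) D" and ?S = "D - mat_adjoint B * minv A * B"
  have M: "?M \<in> carrier_mat (N + q) (N + q)"
    using A D by simp
  have Bt: "mat_adjoint B \<in> carrier_mat q N"
    using B by simp
  note detA = pos_def_det[OF pos_def_four_block(1)[OF A B D pd] A]
  note Ai = minv_correct[OF A detA]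
  have S: "?S \<in> carrier_mat q q"
    using D Bt Ai B by (auto intro: minus_carrier_mat)
  note detS = pos_def_det[OF pos_def_schur_complement[OF A B D pd] S]
  show Z: "Z \<in> carrier_mat q m"
    unfolding Z_def using minv_correct[OF S detS] x2 Bt Ai x1 by (auto intro: minus_carrier_mat)
  have y: "minv A * (x1 - B * Z) = minv A * x1 - minv A * B * Z"
    using mult_minus_distrib_mat[OF Ai(1) x1 mult_carrier_mat[OF B Z]] assoc_mult_mat[OF Ai(1) B Z] by simp
  have "?M * ((minv A * (x1 - B * Z)) @\<^sub>r Z) = x1 @\<^sub>r x2"
    unfolding Z_def by (rule four_block_mult_solution[OF A detA B Bt D detS x1 x2])
  moreover have "(minv A * (x1 - B * Z)) @\<^sub>r Z \<in> carrier_mat (N + q) m"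
    using Ai(1) x1 B Z by (auto intro: minus_carrier_mat)
  ultimately show "minv ?M * (x1 @\<^sub>r x2) = (minv A * x1 - minv A * B * Z) @\<^sub>r Z"
    using minv_mult_cancel(1)[OF M pos_def_det[OF pd M]] y by metis
qed

lemma schur_residual_adjoint:
  assumes A: "(A :: complex mat) \<in> carrier_mat N N" "det A \<noteq> 0" "mat_adjoint A = A"
    and B: "B \<in> carrier_mat N q" and x1: "x1 \<in> carrier_mat N m" and x2: "x2 \<in> carrier_mat q m"
  shows "mat_adjoint (x2 - mat_adjoint B * minv A * x1) = mat_adjoint x2 - mat_adjoint x1 * (minv A * B)"
proof -
  have Bt: "mat_adjoint B \<in> carrier_mat q N"
    using B by simp
  note Ai = minv_correct(1)[OF A(1,2)]
  have BtAi: "mat_adjoint B * minv A \<in> carrier_mat q N"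
    using mult_carrier_mat[OF Bt Ai] .
  have "mat_adjoint (mat_adjoint B * minv A) = minv A * B"
    using mat_adjoint_mult[OF Bt Ai] minv_hermitian[OF A] by simp
  then show ?thesis
    using mat_adjoint_minus[OF x2 mult_carrier_mat[OF BtAi x1]] mat_adjoint_mult[OF BtAi x1] by simp
qed

lemma schur_quadratic_form:
  assumes A: "A \<in> carrier_mat N N" and B: "B \<in> carrier_mat N q" and D: "D \<in> carrier_mat q q"
    and pd: "pos_def (four_block_mat A B (mat_adjoint B) D)"
    and x1: "x1 \<in> carrier_mat N m" and x2: "x2 \<in> carrier_mat q m"
  shows "mat_adjoint (x1 @\<^sub>r x2) * minv (four_block_mat A B (mat_adjoint B) D) * (x1 @\<^sub>r x2)
       = mat_adjoint x1 * minv A * x1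
         + mat_adjoint (x2 - mat_adjoint B * minv A * x1) * minv (D - mat_adjoint B * minv A * B)
           * (x2 - mat_adjoint B * minv A * x1)"
proof -
  let ?M = "four_block_mat A B (mat_adjoint B) D" and ?S = "D - mat_adjoint B * minv A * B"
    and ?g = "x2 - mat_adjoint B * minv A * x1"
  define Z where "Z = minv ?S * ?g"
  have M: "?M \<in> carrier_mat (N + q) (N + q)"
    using A D by simp
  note pdA = pos_def_four_block(1)[OF A B D pd]
  note detA = pos_def_det[OF pdA A] and Ai = minv_correct(1)[OF A pos_def_det[OF pdA A]]
  note Z = four_block_minv_mult(2)[OF A B D pd x1 x2, folded Z_def]
  have x1t: "mat_adjoint x1 \<in> carrier_mat m N" and AiB: "minv A * B \<in> carrier_mat N q"
    using x1 Ai B by auto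
  have y1: "minv A * x1 - minv A * B * Z \<in> carrier_mat N m"
    using Ai x1 AiB Z by (auto intro: minus_carrier_mat)
  have "mat_adjoint (x1 @\<^sub>r x2) * minv ?M * (x1 @\<^sub>r x2)
      = rowcat (mat_adjoint x1) (mat_adjoint x2) * ((minv A * x1 - minv A * B * Z) @\<^sub>r Z)"
    using assoc_mult_mat[of "mat_adjoint (x1 @\<^sub>r x2)" m "N + q" "minv ?M" "N + q" "x1 @\<^sub>r x2" m]
      four_block_minv_mult(1)[OF A B D pd x1 x2, folded Z_def]
      minv_correct[OF M pos_def_det[OF pd M]] mat_adjoint_append_rows[OF x1 x2] x1 x2 by auto
  also have "\<dots> = mat_adjoint x1 * (minv A * x1 - minv A * B * Z) + mat_adjoint x2 * Z"
    by (rule rowcat_mult_append_rows[OF x1t mat_adjoint_carrier[OF x2] y1 Z])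
  also have "\<dots> = mat_adjoint x1 * minv A * x1 + (mat_adjoint x2 * Z - mat_adjoint x1 * (minv A * B) * Z)"
    using mult_minus_distrib_mat[OF x1t mult_carrier_mat[OF Ai x1] mult_carrier_mat[OF AiB Z]]
      assoc_mult_mat[OF x1t Ai x1] assoc_mult_mat[OF x1t AiB Z]
      minus_add_swap_mat[OF mult_carrier_mat[OF mult_carrier_mat[OF x1t Ai] x1]
        mult_carrier_mat[OF mult_carrier_mat[OF x1t AiB] Z] mult_carrier_mat[OF mat_adjoint_carrier[OF x2] Z]]
    by simp
  also have "mat_adjoint x2 * Z - mat_adjoint x1 * (minv A * B) * Z = mat_adjoint ?g * Z"
    using schur_residual_adjoint[OF A detA pos_defD(1)[OF pdA A] B x1 x2]
      minus_mult_distrib_mat[OF mat_adjoint_carrier[OF x2] mult_carrier_mat[OF x1t AiB] Z] by simp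
  also have "mat_adjoint ?g * Z = mat_adjoint ?g * minv ?S * ?g"
  proof -
    have Bt: "mat_adjoint B \<in> carrier_mat q N"
      using B by simp
    have S: "?S \<in> carrier_mat q q" and g: "?g \<in> carrier_mat q m"
      using D Bt Ai B x1 x2 by (auto intro: minus_carrier_mat)
    show ?thesis
      unfolding Z_def using assoc_mult_mat[OF mat_adjoint_carrier[OF g]
          pos_def_minv_carrier[OF pos_def_schur_complement[OF A B D pd] S] g] by simp
  qed
  finally show ?thesis .
qed

section \<open>Block columns and block Hankel matrices\<close>

definition block_col :: "nat \<Rightarrow> nat \<Rightarrow> (nat \<Rightarrow> complex mat) \<Rightarrow> complex mat" where
  "block_col q r F = blockmat q r 1 (\<lambda>l k. F l)"

lemma blockmat_carrier [simp]: "blockmat q r c F \<in> carrier_mat (r * q) (c * q)"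
  and dim_blockmat [simp]: "dim_row (blockmat q r c F) = r * q" "dim_col (blockmat q r c F) = c * q"
  unfolding blockmat_def by auto

lemma index_blockmat [simp]:
  "i < r * q \<Longrightarrow> k < c * q \<Longrightarrow>
     blockmat q r c F $$ (i, k) = F (i div q) (k div q) $$ (i mod q, k mod q)"
  unfolding blockmat_def by auto

lemma blockmat_cong:
  "(\<And>l k. l < r \<Longrightarrow> k < c \<Longrightarrow> F l k = G l k) \<Longrightarrow> blockmat q r c F = blockmat q r c G"
  by (rule eq_matI) (auto simp: less_mult_imp_div_less)

lemma mat_adjoint_blockmat:
  assumes "\<And>l k. l < r \<Longrightarrow> k < c \<Longrightarrow> F l k \<in> carrier_mat q q"
  shows "mat_adjoint (blockmat q r c F) = blockmat q c r (\<lambda>l k. mat_adjoint (F k l))"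
proof (rule eq_matI)
  fix i k
  assume "i < dim_row (blockmat q c r (\<lambda>l k. mat_adjoint (F k l)))"
    "k < dim_col (blockmat q c r (\<lambda>l k. mat_adjoint (F k l)))"
  then have ik: "i < c * q" "k < r * q"
    by auto
  then have "0 < q"
    by (cases q) auto
  with ik have "i div q < c" "k div q < r" "i mod q < q" "k mod q < q"
    by (auto simp: less_mult_imp_div_less)
  then show "mat_adjoint (blockmat q r c F) $$ (i, k) = blockmat q c r (\<lambda>l k. mat_adjoint (F k l)) $$ (i, k)"
    using assms[of "k div q" "i div q"] ik by simp
qed auto

lemma div_mod_last_block:
  assumes "j * q \<le> (i :: nat)" "i < (j + 1) * q"
  shows "i div q = j" "i mod q = i - j * q"
proof -
  have "i = (i - j * q) + j * q" "i - j * q < q"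
    using assms by auto
  then show "i div q = j" "i mod q = i - j * q"
    by (metis add.commute div_mult_self1 div_less less_nat_zero_code mod_mult_self1 mod_less
        add_0 mult_0_right)+
qed

lemma blockmat_split_last:
  assumes F: "\<And>l k. l \<le> j \<Longrightarrow> k \<le> j \<Longrightarrow> F l k \<in> carrier_mat q q"
  shows "blockmat q (j + 1) (j + 1) F = four_block_mat (blockmat q j j F)
     (blockmat q j 1 (\<lambda>l k. F l j)) (blockmat q 1 j (\<lambda>l k. F j k)) (F j j)"
proof (rule eq_matI)
  fix i k
  assume "i < dim_row (four_block_mat (blockmat q j j F)
     (blockmat q j 1 (\<lambda>l k. F l j)) (blockmat q 1 j (\<lambda>l k. F j k)) (F j j))"
    "k < dim_col (four_block_mat (blockmat q j j F)
     (blockmat q j 1 (\<lambda>l k. F l j)) (blockmat q 1 j (\<lambda>l k. F j k)) (F j j))"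
  then have ik: "i < (j + 1) * q" "k < (j + 1) * q"
    using F[of j j] by auto
  have last: "x div q = j" "x mod q = x - j * q" if "\<not> x < j * q" "x < (j + 1) * q" for x
    using div_mod_last_block that by auto
  show "blockmat q (j + 1) (j + 1) F $$ (i, k) = four_block_mat (blockmat q j j F)
     (blockmat q j 1 (\<lambda>l k. F l j)) (blockmat q 1 j (\<lambda>l k. F j k)) (F j j) $$ (i, k)"
    using ik F[of j j] last[of i] last[of k]
    by (cases "i < j * q"; cases "k < j * q") (auto simp: less_mult_imp_div_less)
qed (use F[of j j] in auto)

lemma block_col_carrier [simp]: "block_col q r F \<in> carrier_mat (r * q) q"
  and dim_block_col [simp]: "dim_row (block_col q r F) = r * q" "dim_col (block_col q r F) = q"
  unfolding block_col_def by auto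

lemma index_block_col [simp]:
  "i < r * q \<Longrightarrow> c < q \<Longrightarrow> block_col q r F $$ (i, c) = F (i div q) $$ (i mod q, c)"
  unfolding block_col_def by simp

lemma block_col_cong: "(\<And>l. l < r \<Longrightarrow> F l = G l) \<Longrightarrow> block_col q r F = block_col q r G"
  unfolding block_col_def by (rule blockmat_cong) simp

lemma block_col_Suc:
  assumes "F r \<in> carrier_mat q q"
  shows "block_col q (Suc r) F = block_col q r F @\<^sub>r F r"
proof (rule eq_matI)
  fix i c
  assume "i < dim_row (block_col q r F @\<^sub>r F r)" "c < dim_col (block_col q r F @\<^sub>r F r)"
  then show "block_col q (Suc r) F $$ (i, c) = (block_col q r F @\<^sub>r F r) $$ (i, c)"
    using assms div_mod_last_block[of r q i] by (cases "i < r * q") auto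
qed (use assms in auto)

lemma block_col_one: "F 0 \<in> carrier_mat q q \<Longrightarrow> block_col q 1 F = F 0"
  by (rule eq_matI) auto

lemma block_col_mult:
  assumes "\<And>l. l < r \<Longrightarrow> F l \<in> carrier_mat q q" and X: "X \<in> carrier_mat q q"
  shows "block_col q r F * X = block_col q r (\<lambda>l. F l * X)"
proof (rule eq_matI)
  fix i c
  assume "i < dim_row (block_col q r (\<lambda>l. F l * X))" "c < dim_col (block_col q r (\<lambda>l. F l * X))"
  then have "i < r * q" "c < q" "i div q < r" "i mod q < q"
    by (auto simp: less_mult_imp_div_less)
  then show "(block_col q r F * X) $$ (i, c) = block_col q r (\<lambda>l. F l * X) $$ (i, c)"
    using assms(1)[of "i div q"] X by (auto simp: scalar_prod_def intro!: sum.cong)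
qed (use X in auto)

lemma block_col_add:
  assumes "\<And>l. l < r \<Longrightarrow> F l \<in> carrier_mat q q" "\<And>l. l < r \<Longrightarrow> G l \<in> carrier_mat q q"
  shows "block_col q r F + block_col q r G = block_col q r (\<lambda>l. F l + G l)"
proof (rule eq_matI)
  fix i c
  assume "i < dim_row (block_col q r (\<lambda>l. F l + G l))" "c < dim_col (block_col q r (\<lambda>l. F l + G l))"
  then have "i < r * q" "c < q" "i div q < r" "i mod q < q"
    by (auto simp: less_mult_imp_div_less)
  then show "(block_col q r F + block_col q r G) $$ (i, c) = block_col q r (\<lambda>l. F l + G l) $$ (i, c)"
    using assms(1,2)[of "i div q"] by simp
qed auto

lemma block_col_smult:
  assumes "\<And>l. l < r \<Longrightarrow> F l \<in> carrier_mat q q"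
  shows "z \<cdot>\<^sub>m block_col q r F = block_col q r (\<lambda>l. z \<cdot>\<^sub>m F l)"
proof (rule eq_matI)
  fix i c
  assume "i < dim_row (block_col q r (\<lambda>l. z \<cdot>\<^sub>m F l))" "c < dim_col (block_col q r (\<lambda>l. z \<cdot>\<^sub>m F l))"
  then have "i < r * q" "c < q" "i div q < r" "i mod q < q"
    by (auto simp: less_mult_imp_div_less)
  then show "(z \<cdot>\<^sub>m block_col q r F) $$ (i, c) = block_col q r (\<lambda>l. z \<cdot>\<^sub>m F l) $$ (i, c)"
    using assms[of "i div q"] by simp
qed auto

lemma block_col_uminus:
  assumes "\<And>l. l < r \<Longrightarrow> F l \<in> carrier_mat q q"
  shows "- block_col q r F = block_col q r (\<lambda>l. - F l)"
proof (rule eq_matI)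
  fix i c
  assume "i < dim_row (block_col q r (\<lambda>l. - F l))" "c < dim_col (block_col q r (\<lambda>l. - F l))"
  then have "i < r * q" "c < q" "i div q < r" "i mod q < q"
    by (auto simp: less_mult_imp_div_less)
  then show "(- block_col q r F) $$ (i, c) = block_col q r (\<lambda>l. - F l) $$ (i, c)"
    using assms[of "i div q"] by simp
qed auto

lemma hankel_carrier [simp]: "hankel q f j \<in> carrier_mat ((j + 1) * q) ((j + 1) * q)"
  and dim_hankel [simp]: "dim_row (hankel q f j) = (j + 1) * q" "dim_col (hankel q f j) = (j + 1) * q"
  unfolding hankel_def by (rule blockmat_carrier) simp_all

lemma hankel_0: "f 0 \<in> carrier_mat q q \<Longrightarrow> hankel q f 0 = f 0"
  unfolding hankel_def by (rule eq_matI) auto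

lemma hankel_carrier_pred: "0 < j \<Longrightarrow> hankel q f (j - 1) \<in> carrier_mat (j * q) (j * q)"
  using hankel_carrier[of q f "j - 1"] by simp

lemma hankel_split:
  assumes "0 < j" and f: "\<And>i. i \<le> 2 * j \<Longrightarrow> f i \<in> carrier_mat q q \<and> mat_adjoint (f i) = f i"
  shows "hankel q f j = four_block_mat (hankel q f (j - 1)) (block_col q j (\<lambda>l. f (j + l)))
           (mat_adjoint (block_col q j (\<lambda>l. f (j + l)))) (f (2 * j))"
proof -
  have jj: "j - 1 + 1 = j"
    using assms by simp
  have "hankel q f j = four_block_mat (blockmat q j j (\<lambda>l k. f (l + k)))
      (blockmat q j 1 (\<lambda>l k. f (l + j))) (blockmat q 1 j (\<lambda>l k. f (j + k))) (f (j + j))"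
    unfolding hankel_def by (rule blockmat_split_last) (use f in auto)
  also have "blockmat q j j (\<lambda>l k. f (l + k)) = hankel q f (j - 1)"
    unfolding hankel_def jj ..
  also have "blockmat q j 1 (\<lambda>l k. f (l + j)) = block_col q j (\<lambda>l. f (j + l))"
    unfolding block_col_def by (simp add: add.commute)
  also have "blockmat q 1 j (\<lambda>l k. f (j + k)) = mat_adjoint (block_col q j (\<lambda>l. f (j + l)))"
    unfolding block_col_def using f by (subst mat_adjoint_blockmat) (auto intro!: blockmat_cong)
  finally show ?thesis
    by (simp add: mult_2)
qed

lemma pos_def_hankel_leading:
  assumes f: "\<And>i. i \<le> 2 * N \<Longrightarrow> f i \<in> carrier_mat q q \<and> mat_adjoint (f i) = f i"
    and pd: "pos_def (hankel q f N)" and j: "j \<le> N"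
  shows "pos_def (hankel q f j)"
  using j
proof (induction rule: inc_induct)
  case (step k)
  have split: "hankel q f (Suc k) = four_block_mat (hankel q f k) (block_col q (Suc k) (\<lambda>l. f (Suc k + l)))
      (mat_adjoint (block_col q (Suc k) (\<lambda>l. f (Suc k + l)))) (f (2 * Suc k))"
    using hankel_split[of "Suc k" f q] f step.hyps by simp
  have "f (2 * Suc k) \<in> carrier_mat q q"
    using f step.hyps by simp
  from pos_def_four_block(1)[OF hankel_carrier block_col_carrier this] step.IH show ?case
    unfolding split by simp
qed (rule pd)

lemma hankel_mult_vec_index:
  assumes "x \<in> carrier_vec ((j + 1) * q)" "i < (j + 1) * q"
  shows "(hankel q f j *\<^sub>v x) $ i = (\<Sum>k<(j + 1) * q. f (i div q + k div q) $$ (i mod q, k mod q) * x $ k)"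
  using assms by (auto simp: hankel_def scalar_prod_def lessThan_atLeast0 intro!: sum.cong)

lemma hankel_mult_append_zero_index:
  assumes w: "w \<in> carrier_vec (j * q)" and i: "i < (j + 1) * q"
  shows "(hankel q f j *\<^sub>v (w @\<^sub>v 0\<^sub>v q)) $ i
    = (\<Sum>k<j * q. f (i div q + k div q) $$ (i mod q, k mod q) * w $ k)"
proof -
  have "w @\<^sub>v 0\<^sub>v q \<in> carrier_vec ((j + 1) * q)"
    using append_carrier_vec[OF w zero_carrier_vec[of q]] by (simp add: add.commute)
  then show ?thesis
    using w by (simp add: hankel_mult_vec_index[OF _ i] add.commute[of q] sum_lessThan_add)
qed

lemma hankel_mult_zero_append_index:
  assumes w: "w \<in> carrier_vec (j * q)" and i: "i < (j + 1) * q"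
  shows "(hankel q f j *\<^sub>v (0\<^sub>v q @\<^sub>v w)) $ i
    = (\<Sum>k<j * q. f (i div q + k div q + 1) $$ (i mod q, k mod q) * w $ k)"
proof -
  have q: "0 < q"
    using i by (cases q) auto
  have "0\<^sub>v q @\<^sub>v w \<in> carrier_vec ((j + 1) * q)"
    using w by simp
  then have "(hankel q f j *\<^sub>v (0\<^sub>v q @\<^sub>v w)) $ i
      = (\<Sum>k<q + j * q. f (i div q + k div q) $$ (i mod q, k mod q) * (0\<^sub>v q @\<^sub>v w) $ k)"
    by (simp add: hankel_mult_vec_index[OF _ i])
  also have "\<dots> = (\<Sum>k<j * q. f (i div q + (q + k) div q) $$ (i mod q, (q + k) mod q) * w $ k)"
    using w by (simp add: sum_lessThan_add)
  finally show ?thesis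
    using q by (simp add: add.assoc)
qed

lemma hankel_mult_first_block:
  assumes v: "v \<in> carrier_vec q"
  shows "hankel q f j *\<^sub>v (v @\<^sub>v 0\<^sub>v (j * q)) = block_col q (j + 1) f *\<^sub>v v"
proof (rule eq_vecI)
  fix i
  assume "i < dim_vec (block_col q (j + 1) f *\<^sub>v v)"
  then have i: "i < (j + 1) * q"
    by simp
  have "v @\<^sub>v 0\<^sub>v (j * q) \<in> carrier_vec ((j + 1) * q)"
    using v by simp
  then have "(hankel q f j *\<^sub>v (v @\<^sub>v 0\<^sub>v (j * q))) $ i
      = (\<Sum>k<q + j * q. f (i div q + k div q) $$ (i mod q, k mod q) * (v @\<^sub>v 0\<^sub>v (j * q)) $ k)"
    by (simp add: hankel_mult_vec_index[OF _ i])
  also have "\<dots> = (\<Sum>k<q. f (i div q) $$ (i mod q, k) * v $ k)"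
    using v by (simp add: sum_lessThan_add)
  also have "\<dots> = (block_col q (j + 1) f *\<^sub>v v) $ i"
    using i v by (simp add: scalar_prod_def lessThan_atLeast0)
  finally show "(hankel q f j *\<^sub>v (v @\<^sub>v 0\<^sub>v (j * q))) $ i = (block_col q (j + 1) f *\<^sub>v v) $ i" .
qed (use v in simp)

lemma hankel_shift_columns:
  assumes g: "\<And>m x y. m < 2 * j \<Longrightarrow> x < q \<Longrightarrow> y < q \<Longrightarrow>
      g m $$ (x, y) = f (m + 1) $$ (x, y) - z * f m $$ (x, y)"
    and w: "w \<in> carrier_vec (j * q)"
  shows "hankel q g j *\<^sub>v (w @\<^sub>v 0\<^sub>v q) = hankel q f j *\<^sub>v ((0\<^sub>v q @\<^sub>v w) - z \<cdot>\<^sub>v (w @\<^sub>v 0\<^sub>v q))"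
proof -
  have c1: "0\<^sub>v q @\<^sub>v w \<in> carrier_vec ((j + 1) * q)" and c2: "w @\<^sub>v 0\<^sub>v q \<in> carrier_vec ((j + 1) * q)"
    using append_carrier_vec[OF w zero_carrier_vec[of q]] w by (simp_all add: add.commute)
  have "hankel q f j *\<^sub>v ((0\<^sub>v q @\<^sub>v w) - z \<cdot>\<^sub>v (w @\<^sub>v 0\<^sub>v q))
      = hankel q f j *\<^sub>v (0\<^sub>v q @\<^sub>v w) - z \<cdot>\<^sub>v (hankel q f j *\<^sub>v (w @\<^sub>v 0\<^sub>v q))"
    using mult_minus_distrib_mat_vec[OF hankel_carrier c1 smult_carrier_vec[THEN iffD2, OF c2]]
      mult_mat_vec[OF hankel_carrier c2] by simp
  also have "\<dots> = hankel q g j *\<^sub>v (w @\<^sub>v 0\<^sub>v q)"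
  proof (rule eq_vecI)
    fix i
    assume "i < dim_vec (hankel q g j *\<^sub>v (w @\<^sub>v 0\<^sub>v q))"
    then have i: "i < (j + 1) * q"
      by simp
    then have q: "0 < q" and "i div q < j + 1"
      by (auto simp: less_mult_imp_div_less intro: gr0I)
    then have entry: "f (i div q + k div q + 1) $$ (i mod q, k mod q) - z * f (i div q + k div q) $$ (i mod q, k mod q)
        = g (i div q + k div q) $$ (i mod q, k mod q)" if "k < j * q" for k
      using g[of "i div q + k div q" "i mod q" "k mod q"] less_mult_imp_div_less[OF that] by simp
    show "(hankel q f j *\<^sub>v (0\<^sub>v q @\<^sub>v w) - z \<cdot>\<^sub>v (hankel q f j *\<^sub>v (w @\<^sub>v 0\<^sub>v q))) $ i
        = (hankel q g j *\<^sub>v (w @\<^sub>v 0\<^sub>v q)) $ i"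
      using i w entry hankel_mult_append_zero_index[OF w i, of f] hankel_mult_append_zero_index[OF w i, of g]
        hankel_mult_zero_append_index[OF w i, of f]
      by (simp add: sum_distrib_left flip: sum_subtractf left_diff_distrib mult.assoc)
  qed (simp add: add.commute)
  finally show ?thesis ..
qed

lemma hankel_shift_rows:
  assumes g: "\<And>m x y. m < 2 * j \<Longrightarrow> x < q \<Longrightarrow> y < q \<Longrightarrow>
      g m $$ (x, y) = f (m + 1) $$ (x, y) - z * f m $$ (x, y)"
    and j: "0 < j" and w: "w \<in> carrier_vec (j * q)" and i: "i < j * q"
  shows "(hankel q g (j - 1) *\<^sub>v w) $ i
    = (hankel q f j *\<^sub>v (w @\<^sub>v 0\<^sub>v q)) $ (i + q) - z * (hankel q f j *\<^sub>v (w @\<^sub>v 0\<^sub>v q)) $ i"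
proof -
  have jj: "(j - 1 + 1) * q = j * q"
    using j by simp
  have q: "0 < q" and "i div q < j"
    using i by (auto simp: less_mult_imp_div_less intro: gr0I)
  then have entry: "g (i div q + k div q) $$ (i mod q, k mod q)
      = f (i div q + k div q + 1) $$ (i mod q, k mod q) - z * f (i div q + k div q) $$ (i mod q, k mod q)"
    if "k < j * q" for k
    using g[of "i div q + k div q" "i mod q" "k mod q"] less_mult_imp_div_less[OF that] by simp
  have "(hankel q g (j - 1) *\<^sub>v w) $ i = (\<Sum>k<j * q. g (i div q + k div q) $$ (i mod q, k mod q) * w $ k)"
    using hankel_mult_vec_index[of w "j - 1" q i g] w i unfolding jj by simp
  also have "\<dots> = (\<Sum>k<j * q. f (i div q + k div q + 1) $$ (i mod q, k mod q) * w $ k)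
      - z * (\<Sum>k<j * q. f (i div q + k div q) $$ (i mod q, k mod q) * w $ k)"
    using entry by (simp add: sum_distrib_left left_diff_distrib mult.assoc flip: sum_subtractf)
  also have "\<dots> = (hankel q f j *\<^sub>v (w @\<^sub>v 0\<^sub>v q)) $ (i + q) - z * (hankel q f j *\<^sub>v (w @\<^sub>v 0\<^sub>v q)) $ i"
    using hankel_mult_append_zero_index[OF w, of "i + q" f] hankel_mult_append_zero_index[OF w, of i f] i q
    by simp
  finally show ?thesis .
qed

lemma shift_equation_trivial:
  fixes w v :: "complex vec"
  assumes w: "w \<in> carrier_vec (j * q)" and v: "v \<in> carrier_vec q"
    and eq: "(0\<^sub>v q @\<^sub>v w) - z \<cdot>\<^sub>v (w @\<^sub>v 0\<^sub>v q) = v @\<^sub>v 0\<^sub>v (j * q)"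
  shows "w = 0\<^sub>v (j * q)" "v = 0\<^sub>v q"
proof -
  have entry: "(if q \<le> t then w $ (t - q) else 0) - z * (if t < j * q then w $ t else 0)
      = (if t < q then v $ t else 0)" if "t < (j + 1) * q" for t
    using arg_cong[OF eq, of "\<lambda>x. x $ t"] that w v by (auto split: if_splits)
  have w0: "w $ k = 0" if "k < j * q" for k
    using that
  proof (induction "j * q - k" arbitrary: k rule: less_induct)
    case (less k)
    then have "0 < q"
      by (auto intro: gr0I)
    then have "w $ k - z * (if k + q < j * q then w $ (k + q) else 0) = 0"
      using entry[of "k + q"] less.prems by simp
    then have "w $ k = z * (if k + q < j * q then w $ (k + q) else 0)"
      by simp
    also have "\<dots> = 0"
      using less.hyps[of "k + q"] \<open>0 < q\<close> by auto
    finally show ?case .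
  qed
  then show "w = 0\<^sub>v (j * q)"
    using w by (auto intro!: eq_vecI)
  show "v = 0\<^sub>v q"
  proof (rule eq_vecI)
    fix t
    assume "t < dim_vec (0\<^sub>v q :: complex vec)"
    then show "v $ t = 0\<^sub>v q $ t"
      using entry[of t] w0[of t] by (auto split: if_splits)
  qed (use v in simp)
qed

section \<open>The resolvent of the block shift\<close>

definition Rinv :: "nat \<Rightarrow> nat \<Rightarrow> complex \<Rightarrow> complex mat" where
  "Rinv q j z = 1\<^sub>m ((j + 1) * q) - z \<cdot>\<^sub>m Tm q j"

lemma Tm_carrier [simp]: "Tm q j \<in> carrier_mat ((j + 1) * q) ((j + 1) * q)"
  unfolding Tm_def by (rule blockmat_carrier)

lemma Rinv_carrier [simp]: "Rinv q j z \<in> carrier_mat ((j + 1) * q) ((j + 1) * q)"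
  unfolding Rinv_def by (rule minus_carrier_mat[OF smult_carrier_mat[OF Tm_carrier]])

lemma dim_Rinv [simp]: "dim_row (Rinv q j z) = (j + 1) * q" "dim_col (Rinv q j z) = (j + 1) * q"
  using Rinv_carrier[of q j z] by auto

lemma index_Rinv:
  assumes "i < (j + 1) * q" "k < (j + 1) * q"
  shows "Rinv q j z $$ (i, k) = (if i = k then 1 else 0) - (if i = k + q then z else 0)"
proof -
  have q: "0 < q"
    using assms by (auto intro: gr0I)
  have "i div q = k div q + 1 \<and> i mod q = k mod q \<longleftrightarrow> i = k + q"
    by (metis q add.commute div_mult_mod_eq div_mult_self1 distrib_right mod_mult_self1 mult_1 less_numeral_extra(3))
  then show ?thesis
    using assms q unfolding Rinv_def Tm_def by auto
qed

lemma det_Rinv: "det (Rinv q j z) = 1"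
proof -
  have "det (Rinv q j z) = prod_list (diag_mat (Rinv q j z))"
    by (rule det_lower_triangular[OF _ Rinv_carrier]) (simp add: index_Rinv)
  also have "diag_mat (Rinv q j z) = map (\<lambda>_. 1) [0..<(j + 1) * q]"
    by (auto simp: diag_mat_def index_Rinv intro!: map_cong)
  finally show ?thesis
    by (simp add: map_replicate_const)
qed

lemma Rm_carrier [simp]: "Rm q j z \<in> carrier_mat ((j + 1) * q) ((j + 1) * q)"
  unfolding Rm_def Rinv_def[symmetric] using minv_correct(1)[OF Rinv_carrier] by (simp add: det_Rinv)

lemma Rm_Rinv_cancel: "X \<in> carrier_mat ((j + 1) * q) m \<Longrightarrow> Rm q j z * (Rinv q j z * X) = X"
  unfolding Rm_def Rinv_def[symmetric] by (rule minv_mult_cancel(1)[OF Rinv_carrier]) (simp_all add: det_Rinv)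

lemma Rinv_mult_block_col:
  assumes F: "\<And>l. l \<le> j \<Longrightarrow> F l \<in> carrier_mat q q"
  shows "Rinv q j z * block_col q (j + 1) F
    = block_col q (j + 1) (\<lambda>l. if l = 0 then F 0 else F l - z \<cdot>\<^sub>m F (l - 1))"
proof (rule eq_matI)
  fix i c
  assume "i < dim_row (block_col q (j + 1) (\<lambda>l. if l = 0 then F 0 else F l - z \<cdot>\<^sub>m F (l - 1)))"
    "c < dim_col (block_col q (j + 1) (\<lambda>l. if l = 0 then F 0 else F l - z \<cdot>\<^sub>m F (l - 1)))"
  then have i: "i < (j + 1) * q" and c: "c < q"
    by auto
  then have q: "0 < q" and l: "i div q \<le> j"
    using less_mult_imp_div_less[OF i] by (auto intro: gr0I)
  let ?X = "block_col q (j + 1) F"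
  have "(Rinv q j z * ?X) $$ (i, c)
      = (\<Sum>k<(j + 1) * q. ((if i = k then 1 else 0) - (if i = k + q then z else 0)) * ?X $$ (k, c))"
    using i c by (auto simp: scalar_prod_def lessThan_atLeast0 index_Rinv intro!: sum.cong)
  also have "\<dots> = ?X $$ (i, c) - (if q \<le> i then z * ?X $$ (i - q, c) else 0)"
  proof -
    have "(\<Sum>k<(j + 1) * q. (if i = k then 1 else 0) * ?X $$ (k, c))
        = (\<Sum>k<(j + 1) * q. if k = i then ?X $$ (k, c) else 0)"
      by (rule sum.cong) auto
    moreover have "(\<Sum>k<(j + 1) * q. (if i = k + q then z else 0) * ?X $$ (k, c))
        = (\<Sum>k<(j + 1) * q. if k = i - q \<and> q \<le> i then z * ?X $$ (k, c) else 0)"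
      by (rule sum.cong) auto
    ultimately show ?thesis
      using i by (auto simp: left_diff_distrib sum_subtractf)
  qed
  finally show "(Rinv q j z * ?X) $$ (i, c)
      = block_col q (j + 1) (\<lambda>l. if l = 0 then F 0 else F l - z \<cdot>\<^sub>m F (l - 1)) $$ (i, c)"
    using i c q F[OF l] F[of "i div q - 1"] l
    by (cases "q \<le> i") (auto simp: le_div_geq le_mod_geq)
qed auto

definition power_col :: "nat \<Rightarrow> nat \<Rightarrow> complex \<Rightarrow> complex mat" where
  "power_col q j z = block_col q (j + 1) (\<lambda>l. z ^ l \<cdot>\<^sub>m 1\<^sub>m q)"

lemma power_col_carrier [simp]: "power_col q j z \<in> carrier_mat ((j + 1) * q) q"
  and dim_power_col [simp]: "dim_row (power_col q j z) = (j + 1) * q" "dim_col (power_col q j z) = q"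
  unfolding power_col_def by (rule block_col_carrier) simp_all

lemma vv_block_col: "vv q j = block_col q (j + 1) (\<lambda>l. if l = 0 then 1\<^sub>m q else 0\<^sub>m q q)"
  unfolding vv_def block_col_def ..

lemma vv_carrier: "vv q j \<in> carrier_mat ((j + 1) * q) q"
  unfolding vv_block_col by (rule block_col_carrier)

lemma Rm_vv: "Rm q j z * vv q j = power_col q j z"
proof -
  have "Rinv q j z * power_col q j z = vv q j"
    unfolding power_col_def vv_block_col
  proof (subst Rinv_mult_block_col, simp, rule block_col_cong)
    fix l
    show "(if l = 0 then z ^ 0 \<cdot>\<^sub>m 1\<^sub>m q else z ^ l \<cdot>\<^sub>m 1\<^sub>m q - z \<cdot>\<^sub>m (z ^ (l - 1) \<cdot>\<^sub>m 1\<^sub>m q))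
        = (if l = 0 then 1\<^sub>m q else 0\<^sub>m q q)"
      by (cases l) (auto intro!: eq_matI)
  qed
  moreover have "Rm q j z * (Rinv q j z * power_col q j z) = power_col q j z"
    by (rule Rm_Rinv_cancel[OF power_col_carrier])
  ultimately show ?thesis
    by simp
qed

lemma power_col_Suc:
  "0 < j \<Longrightarrow> power_col q j z = power_col q (j - 1) z @\<^sub>r (z ^ j \<cdot>\<^sub>m 1\<^sub>m q)"
  unfolding power_col_def using block_col_Suc[of "\<lambda>l. z ^ l \<cdot>\<^sub>m 1\<^sub>m q" j q] by simp

lemma power_col_mult_vec_index:
  assumes "v \<in> carrier_vec q" "i < (j + 1) * q"
  shows "(power_col q j z *\<^sub>v v) $ i = z ^ (i div q) * v $ (i mod q)"
proof -
  have "0 < q"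
    using assms(2) by (auto intro: gr0I)
  have "(power_col q j z *\<^sub>v v) $ i = (\<Sum>c<q. power_col q j z $$ (i, c) * v $ c)"
    using assms by (auto simp: scalar_prod_def lessThan_atLeast0 intro!: sum.cong)
  also have "\<dots> = (\<Sum>c<q. if c = i mod q then z ^ (i div q) * v $ c else 0)"
    using assms \<open>0 < q\<close> by (intro sum.cong) (auto simp: power_col_def)
  finally show ?thesis
    using \<open>0 < q\<close> by simp
qed

section \<open>The Dyukarev--Stieltjes parameters\<close>

definition cseq :: "real \<Rightarrow> (nat \<Rightarrow> complex mat) \<Rightarrow> nat \<Rightarrow> complex mat" where
  "cseq b s i = complex_of_real b \<cdot>\<^sub>m s i - s (i + 1)"

lemma K1_carrier: "K1 q b s j \<in> carrier_mat ((j + 1) * q) ((j + 1) * q)"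
  unfolding K1_def by (rule hankel_carrier)

lemma H2_carrier: "H2 q a b s j \<in> carrier_mat ((j + 1) * q) ((j + 1) * q)"
  unfolding H2_def by (rule hankel_carrier)

lemma H2_pred_carrier: "0 < j \<Longrightarrow> H2 q a b s (j - 1) \<in> carrier_mat (j * q) (j * q)"
  unfolding H2_def by (rule hankel_carrier_pred)

lemma K1_pred_carrier: "0 < j \<Longrightarrow> K1 q b s (j - 1) \<in> carrier_mat (j * q) (j * q)"
  unfolding K1_def by (rule hankel_carrier_pred)

lemma K1_cseq: "K1 q b s j = hankel q (cseq b s) j"
  unfolding K1_def cseq_def ..

lemma Yt1_cseq: "Yt1 q b s j = block_col q j (\<lambda>l. cseq b s (j + l))"
  unfolding Yt1_def block_col_def cseq_def by (simp add: add.assoc)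

lemma Y2_block_col: "Y2 q a b s j = block_col q j (\<lambda>l. shat a b s (j + l))"
  unfolding Y2_def block_col_def ..

locale dsm_standing =
  fixes q n :: nat and a b :: real and s :: "nat \<Rightarrow> complex mat"
  assumes n: "1 \<le> n"
    and s: "\<And>j. j \<le> 2 * n + 1 \<Longrightarrow> s j \<in> carrier_mat q q \<and> hermitian (s j)"
    and pos_def_H2_last: "pos_def (H2 q a b s (n - 1))"
    and pos_def_K1_last: "pos_def (K1 q b s n)"
begin

lemma s_carrier: "j \<le> 2 * n + 1 \<Longrightarrow> s j \<in> carrier_mat q q"
  using s by blast

lemma s_index_cnj: "j \<le> 2 * n + 1 \<Longrightarrow> x < q \<Longrightarrow> y < q \<Longrightarrow> cnj (s j $$ (x, y)) = s j $$ (y, x)"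
  using hermitian_index[OF s_carrier hermitianD(2)] s by blast

lemma cseq_hermitian:
  assumes "i \<le> 2 * n"
  shows "cseq b s i \<in> carrier_mat q q \<and> mat_adjoint (cseq b s i) = cseq b s i"
proof -
  have c: "s i \<in> carrier_mat q q" "s (i + 1) \<in> carrier_mat q q"
    using s_carrier assms by auto
  then have "mat_adjoint (cseq b s i) = cseq b s i"
    unfolding cseq_def using assms s_index_cnj[of i] s_index_cnj[of "i + 1"] by (auto intro!: eq_matI)
  then show ?thesis
    unfolding cseq_def using c by auto
qed

lemma shat_hermitian:
  assumes "i < 2 * n"
  shows "shat a b s i \<in> carrier_mat q q \<and> mat_adjoint (shat a b s i) = shat a b s i"
proof -
  have c: "s i \<in> carrier_mat q q" "s (i + 1) \<in> carrier_mat q q" "s (i + 2) \<in> carrier_mat q q"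
    using s_carrier assms by auto
  then have "mat_adjoint (shat a b s i) = shat a b s i"
    unfolding shat_def using assms s_index_cnj[of i] s_index_cnj[of "i + 1"] s_index_cnj[of "i + 2"]
    by (auto intro!: eq_matI)
  then show ?thesis
    unfolding shat_def using c by auto
qed

lemma shat_cseq_index:
  assumes "m < 2 * n" "x < q" "y < q"
  shows "shat a b s m $$ (x, y) = cseq b s (m + 1) $$ (x, y) - complex_of_real a * cseq b s m $$ (x, y)"
  using assms s_carrier[of m] s_carrier[of "m + 1"] s_carrier[of "m + 2"]
  by (simp add: shat_def cseq_def algebra_simps)

lemma shat_cseq_index_below:
  "j \<le> n \<Longrightarrow> m < 2 * j \<Longrightarrow> x < q \<Longrightarrow> y < q \<Longrightarrow>
    shat a b s m $$ (x, y) = cseq b s (m + 1) $$ (x, y) - complex_of_real a * cseq b s m $$ (x, y)"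
  by (rule shat_cseq_index) simp_all

lemma pos_def_K1: "j \<le> n \<Longrightarrow> pos_def (K1 q b s j)"
  unfolding K1_cseq
  by (rule pos_def_hankel_leading[OF cseq_hermitian pos_def_K1_last[unfolded K1_cseq]])

lemma pos_def_H2: "j < n \<Longrightarrow> pos_def (H2 q a b s j)"
  unfolding H2_def
  by (rule pos_def_hankel_leading[OF shat_hermitian pos_def_H2_last[unfolded H2_def]]) (use n in auto)

lemma H2_split:
  assumes "0 < j" "j < n"
  shows "H2 q a b s j = four_block_mat (H2 q a b s (j - 1)) (Y2 q a b s j)
           (mat_adjoint (Y2 q a b s j)) (shat a b s (2 * j))"
  unfolding H2_def Y2_block_col by (rule hankel_split) (use assms shat_hermitian in auto)

lemma K1_split:
  assumes "0 < j" "j \<le> n"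
  shows "K1 q b s j = four_block_mat (K1 q b s (j - 1)) (Yt1 q b s j)
           (mat_adjoint (Yt1 q b s j)) (cseq b s (2 * j))"
  unfolding K1_cseq Yt1_cseq by (rule hankel_split) (use assms cseq_hermitian in auto)

lemma H2_0: "H2 q a b s 0 = shat a b s 0"
  unfolding H2_def by (rule hankel_0) (use shat_hermitian[of 0] n in auto)

lemma K1_0: "K1 q b s 0 = cseq b s 0"
  unfolding K1_cseq by (rule hankel_0) (use cseq_hermitian[of 0] in auto)

lemma pos_def_H2hat: "j < n \<Longrightarrow> pos_def (H2hat q a b s j)"
proof (cases "j = 0")
  case True
  then show ?thesis
    using pos_def_H2[of 0] n by (simp add: H2hat_def H2_0)
next
  case False
  assume j: "j < n"
  have A: "H2 q a b s (j - 1) \<in> carrier_mat (j * q) (j * q)"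
    by (rule H2_pred_carrier) (use False in simp)
  have B: "Y2 q a b s j \<in> carrier_mat (j * q) q"
    by (simp add: Y2_block_col)
  have D: "shat a b s (2 * j) \<in> carrier_mat q q"
    using shat_hermitian[of "2 * j"] j by simp
  from pos_def_schur_complement[OF A B D] show ?thesis
    using pos_def_H2[OF j] H2_split[of j] False j by (simp add: H2hat_def)
qed

lemma pos_def_K1hat: "j \<le> n \<Longrightarrow> pos_def (K1hat q b s j)"
proof (cases "j = 0")
  case True
  then show ?thesis
    using pos_def_K1[of 0] by (simp add: K1hat_def K1_0 cseq_def)
next
  case False
  assume j: "j \<le> n"
  have A: "K1 q b s (j - 1) \<in> carrier_mat (j * q) (j * q)"
    by (rule K1_pred_carrier) (use False in simp)
  have B: "Yt1 q b s j \<in> carrier_mat (j * q) q"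
    by (simp add: Yt1_cseq)
  have D: "cseq b s (2 * j) \<in> carrier_mat q q"
    using cseq_hermitian[of "2 * j"] j by simp
  from pos_def_schur_complement[OF A B D] show ?thesis
    using pos_def_K1[OF j] K1_split[of j] False j by (simp add: K1hat_def cseq_def)
qed

lemma u2_block_col:
  assumes j: "j \<le> n"
  shows "u2 q a b s j + complex_of_real a \<cdot>\<^sub>m (vv q j * s 0) = block_col q (j + 1)
      (\<lambda>l. if l = 0 then u20 a b s + complex_of_real a \<cdot>\<^sub>m s 0 else - shat a b s (l - 1))"
proof -
  have s0: "s 0 \<in> carrier_mat q q"
    using s_carrier by simp
  have "vv q j * s 0 = block_col q (j + 1) (\<lambda>l. if l = 0 then s 0 else 0\<^sub>m q q)"
    unfolding vv_block_col using s0 by (subst block_col_mult) (auto intro!: block_col_cong)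
  moreover have "u2 q a b s j = block_col q (j + 1) (\<lambda>l. if l = 0 then u20 a b s else - shat a b s (l - 1))"
    unfolding u2_def block_col_def ..
  moreover have "u20 a b s \<in> carrier_mat q q" "l < j + 1 \<Longrightarrow> 0 < l \<Longrightarrow> shat a b s (l - 1) \<in> carrier_mat q q"
    for l
    unfolding u20_def using s0 s_carrier[of 1] shat_hermitian[of "l - 1"] j n by auto
  ultimately show ?thesis
    using s0 by (simp add: block_col_smult block_col_add) (auto intro!: block_col_cong)
qed

lemma Rinv_cseq_col:
  assumes j: "j \<le> n"
  shows "Rinv q j a * (- block_col q (j + 1) (cseq b s)) = block_col q (j + 1)
      (\<lambda>l. if l = 0 then u20 a b s + complex_of_real a \<cdot>\<^sub>m s 0 else - shat a b s (l - 1))"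
proof -
  have "- block_col q (j + 1) (cseq b s) = block_col q (j + 1) (\<lambda>l. - cseq b s l)"
    using cseq_hermitian j by (intro block_col_uminus) simp
  then have "Rinv q j a * (- block_col q (j + 1) (cseq b s)) = block_col q (j + 1)
      (\<lambda>l. if l = 0 then - cseq b s 0 else - cseq b s l - complex_of_real a \<cdot>\<^sub>m (- cseq b s (l - 1)))"
    using Rinv_mult_block_col[of j "\<lambda>l. - cseq b s l" q "complex_of_real a"] cseq_hermitian j by simp
  also have "\<dots> = block_col q (j + 1)
      (\<lambda>l. if l = 0 then u20 a b s + complex_of_real a \<cdot>\<^sub>m s 0 else - shat a b s (l - 1))"
  proof (rule block_col_cong)
    fix l
    assume "l < j + 1"
    then have "s (l - 1) \<in> carrier_mat q q" "s l \<in> carrier_mat q q" "s (l + 1) \<in> carrier_mat q q"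
      "s 0 \<in> carrier_mat q q" "s 1 \<in> carrier_mat q q"
      using s_carrier j n by auto
    then show "(if l = 0 then - cseq b s 0 else - cseq b s l - complex_of_real a \<cdot>\<^sub>m (- cseq b s (l - 1)))
      = (if l = 0 then u20 a b s + complex_of_real a \<cdot>\<^sub>m s 0 else - shat a b s (l - 1))"
      by (cases l) (auto intro!: eq_matI simp: cseq_def shat_def u20_def algebra_simps)
  qed
  finally show ?thesis .
qed

lemma Rm_u2:
  assumes j: "j \<le> n"
  shows "Rm q j a * (u2 q a b s j + complex_of_real a \<cdot>\<^sub>m (vv q j * s 0))
    = - block_col q (j + 1) (cseq b s)"
  unfolding u2_block_col[OF j] Rinv_cseq_col[OF j, symmetric]
  by (rule Rm_Rinv_cancel, simp only: uminus_carrier_iff_mat, rule block_col_carrier)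

lemma lam_eq:
  assumes j: "j < n"
  shows "lam q a b s j
    = mat_adjoint (block_col q (j + 1) (cseq b s)) * minv (H2 q a b s j) * block_col q (j + 1) (cseq b s)"
proof -
  let ?w = "u2 q a b s j + complex_of_real a \<cdot>\<^sub>m (vv q j * s 0)" and ?R = "Rm q j a"
  have Hi: "minv (H2 q a b s j) \<in> carrier_mat ((j + 1) * q) ((j + 1) * q)"
    by (rule pos_def_minv_carrier[OF pos_def_H2[OF j] H2_carrier])
  have w: "?w \<in> carrier_mat ((j + 1) * q) q"
    using s_carrier[of 0] by (auto simp: u2_def vv_def)
  have "lam q a b s j = mat_adjoint (?R * ?w) * minv (H2 q a b s j) * (?R * ?w)"
    unfolding lam_def Let_def by (rule adjoint_mult_congruence[OF Rm_carrier w Hi])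
  also have "\<dots> = mat_adjoint (block_col q (j + 1) (cseq b s)) * minv (H2 q a b s j)
      * block_col q (j + 1) (cseq b s)"
    unfolding Rm_u2[OF less_imp_le[OF j]] by (rule congruence_uminus[OF block_col_carrier Hi])
  finally show ?thesis .
qed

lemma mu_eq:
  assumes j: "j \<le> n"
  shows "mu q a b s j = mat_adjoint (power_col q j (complex_of_real a)) * minv (K1 q b s j)
    * power_col q j (complex_of_real a)"
proof -
  have Ki: "minv (K1 q b s j) \<in> carrier_mat ((j + 1) * q) ((j + 1) * q)"
    by (rule pos_def_minv_carrier[OF pos_def_K1[OF j] K1_carrier])
  show ?thesis
    unfolding mu_def Let_def Rm_vv[symmetric]
    by (rule adjoint_mult_congruence[OF Rm_carrier vv_carrier Ki])
qed

lemma minv_H2_carrier: "0 < j \<Longrightarrow> j \<le> n \<Longrightarrow> minv (H2 q a b s (j - 1)) \<in> carrier_mat (j * q) (j * q)"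
  using pos_def_minv_carrier[OF pos_def_H2 H2_pred_carrier] by simp

lemma minv_K1_carrier: "0 < j \<Longrightarrow> j \<le> n \<Longrightarrow> minv (K1 q b s (j - 1)) \<in> carrier_mat (j * q) (j * q)"
  using pos_def_minv_carrier[OF pos_def_K1 K1_pred_carrier] by simp

lemma Q2_0: "Q2 q a b s 0 (complex_of_real a) = cseq b s 0"
  using s_carrier[of 0] s_carrier[of 1] n
  by (auto intro!: eq_matI simp: Q2_def u20_def cseq_def algebra_simps)

lemma Q2_eq:
  assumes j: "0 < j" "j < n"
  shows "Q2 q a b s j (complex_of_real a)
    = cseq b s j - mat_adjoint (Y2 q a b s j) * minv (H2 q a b s (j - 1)) * block_col q j (cseq b s)"
proof -
  let ?Z = "mat_adjoint (Y2 q a b s j) * minv (H2 q a b s (j - 1))"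
    and ?w = "u2 q a b s j + complex_of_real a \<cdot>\<^sub>m (vv q j * s 0)"
  have Z: "?Z \<in> carrier_mat q (j * q)"
    using mult_carrier_mat[OF _ minv_H2_carrier[of j]] j by (simp add: Y2_block_col)
  have c: "cseq b s j \<in> carrier_mat q q"
    using cseq_hermitian[of j] j by simp
  have w: "?w \<in> carrier_mat ((j + 1) * q) q"
    using s_carrier[of 0] by (auto simp: u2_def vv_def)
  have RC: "rowcat (- ?Z) (1\<^sub>m q) \<in> carrier_mat q ((j + 1) * q)"
    using rowcat_carrier[OF uminus_carrier_mat[OF Z] one_carrier_mat[of q]] by (simp add: add.commute)
  have "rowcat (- ?Z) (1\<^sub>m q) * Rm q j (complex_of_real a) * ?w
      = - (rowcat (- ?Z) (1\<^sub>m q) * (block_col q j (cseq b s) @\<^sub>r cseq b s j))"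
    using assoc_mult_mat[OF RC Rm_carrier w] Rm_u2 block_col_Suc[of "cseq b s" j q] c j
      uminus_mult_right_mat[of "rowcat (- ?Z) (1\<^sub>m q)" "block_col q j (cseq b s) @\<^sub>r cseq b s j"]
      carrier_matD[OF Z] carrier_matD[OF c] by simp
  also have "rowcat (- ?Z) (1\<^sub>m q) * (block_col q j (cseq b s) @\<^sub>r cseq b s j)
      = cseq b s j - ?Z * block_col q j (cseq b s)"
    by (rule rowcat_uminus_one_mult[OF Z block_col_carrier c])
  finally show ?thesis
    unfolding Q2_def using j by simp
qed

lemma Gamma1_eq:
  assumes j: "0 < j" "j \<le> n"
  shows "Gamma1 q b s j (complex_of_real a)
    = complex_of_real a ^ j \<cdot>\<^sub>m 1\<^sub>m q
      - mat_adjoint (Yt1 q b s j) * minv (K1 q b s (j - 1)) * power_col q (j - 1) (complex_of_real a)"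
proof -
  let ?Z = "mat_adjoint (Yt1 q b s j) * minv (K1 q b s (j - 1))"
  have Z: "?Z \<in> carrier_mat q (j * q)"
    using mult_carrier_mat[OF _ minv_K1_carrier[OF j]] by (simp add: Yt1_cseq)
  have W: "power_col q (j - 1) (complex_of_real a) \<in> carrier_mat (j * q) q"
    using power_col_carrier[of q "j - 1"] j by simp
  have RC: "rowcat (- ?Z) (1\<^sub>m q) \<in> carrier_mat q ((j + 1) * q)"
    using rowcat_carrier[OF uminus_carrier_mat[OF Z] one_carrier_mat[of q]] by (simp add: add.commute)
  have "rowcat (- ?Z) (1\<^sub>m q) * Rm q j (complex_of_real a) * vv q j
      = rowcat (- ?Z) (1\<^sub>m q) * (power_col q (j - 1) (complex_of_real a) @\<^sub>r (complex_of_real a ^ j \<cdot>\<^sub>m 1\<^sub>m q))"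
    using assoc_mult_mat[OF RC Rm_carrier vv_carrier] Rm_vv power_col_Suc[OF j(1)] by simp
  also have "\<dots> = complex_of_real a ^ j \<cdot>\<^sub>m 1\<^sub>m q - ?Z * power_col q (j - 1) (complex_of_real a)"
    by (rule rowcat_uminus_one_mult[OF Z W]) simp
  finally show ?thesis
    unfolding Gamma1_def using j by simp
qed

lemma Q2_mult_vec_eq_zero:
  assumes j: "j < n" and v: "v \<in> carrier_vec q"
    and Qv: "Q2 q a b s j (complex_of_real a) *\<^sub>v v = 0\<^sub>v q"
  shows "v = 0\<^sub>v q"
proof (cases "j = 0")
  case True
  then show ?thesis
    using pos_def_mult_vec_eq_zero[OF pos_def_K1[of 0]] Qv v n by (simp add: Q2_0 K1_0 cseq_hermitian)
next
  case False
  then have j0: "0 < j"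
    by simp
  let ?C = "block_col q j (cseq b s)"
  have H: "H2 q a b s (j - 1) \<in> carrier_mat (j * q) (j * q)"
    by (rule H2_pred_carrier[OF j0])
  have Y: "Y2 q a b s j \<in> carrier_mat (j * q) q"
    by (simp add: Y2_block_col)
  have D: "shat a b s (2 * j) \<in> carrier_mat q q" and c: "cseq b s j \<in> carrier_mat q q"
    using shat_hermitian[of "2 * j"] cseq_hermitian[of j] j by auto
  have detH: "det (H2 q a b s (j - 1)) \<noteq> 0"
    using pos_def_det[OF pos_def_H2 H] j by simp
  have "(cseq b s j - mat_adjoint (Y2 q a b s j) * minv (H2 q a b s (j - 1)) * ?C) *\<^sub>v v = 0\<^sub>v q"
    using Qv Q2_eq[OF j0 j] by simp
  then obtain w where w: "w \<in> carrier_vec (j * q)"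
    and "H2 q a b s j *\<^sub>v (w @\<^sub>v 0\<^sub>v q) = (?C @\<^sub>r cseq b s j) *\<^sub>v v"
    using schur_complement_kernel[OF H detH Y mat_adjoint_carrier[OF Y] D block_col_carrier c v]
    unfolding H2_split[OF j0 j] by blast
  \<comment> \<open>\<open>shat a b s m = cseq b s (m + 1) - a \<cdot> cseq b s m\<close>, and \<open>v @\<^sub>v 0\<close> picks the first block column of \<open>K1\<close>\<close>
  then have eq: "K1 q b s j *\<^sub>v ((0\<^sub>v q @\<^sub>v w) - complex_of_real a \<cdot>\<^sub>v (w @\<^sub>v 0\<^sub>v q))
      = K1 q b s j *\<^sub>v (v @\<^sub>v 0\<^sub>v (j * q))"
    using hankel_shift_columns[where g = "shat a b s" and f = "cseq b s",
        OF shat_cseq_index_below[OF less_imp_le[OF j]] w] hankel_mult_first_block[OF v]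
      block_col_Suc[of "cseq b s" j q, OF c] j
    by (simp add: H2_def K1_cseq)
  have p1: "(0\<^sub>v q @\<^sub>v w) - complex_of_real a \<cdot>\<^sub>v (w @\<^sub>v 0\<^sub>v q) \<in> carrier_vec ((j + 1) * q)"
    and p2: "v @\<^sub>v 0\<^sub>v (j * q) \<in> carrier_vec ((j + 1) * q)"
    using w v by (auto intro!: carrier_vecI)
  have "(0\<^sub>v q @\<^sub>v w) - complex_of_real a \<cdot>\<^sub>v (w @\<^sub>v 0\<^sub>v q) = v @\<^sub>v 0\<^sub>v (j * q)"
    using pos_def_mult_vec_inj[OF pos_def_K1[OF less_imp_le[OF j]] K1_carrier p1 p2 eq] .
  then show ?thesis
    by (rule shift_equation_trivial(2)[OF w v])
qed

lemma K1_eq_power_col_imp_zero: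
  assumes j0: "0 < j" and j: "j \<le> n" and w: "w \<in> carrier_vec (j * q)" and v: "v \<in> carrier_vec q"
    and Kw: "K1 q b s j *\<^sub>v (w @\<^sub>v 0\<^sub>v q) = power_col q j (complex_of_real a) *\<^sub>v v"
  shows "w = 0\<^sub>v (j * q)"
proof -
  let ?P = "power_col q j (complex_of_real a)"
  have H: "H2 q a b s (j - 1) \<in> carrier_mat (j * q) (j * q)"
    by (rule H2_pred_carrier[OF j0])
  have "H2 q a b s (j - 1) *\<^sub>v w = 0\<^sub>v (j * q)"
  proof (rule eq_vecI)
    fix i
    assume "i < dim_vec (0\<^sub>v (j * q) :: complex vec)"
    then have i: "i < j * q"
      by simp
    then have q: "0 < q"
      by (auto intro: gr0I)
    have "(H2 q a b s (j - 1) *\<^sub>v w) $ i = (?P *\<^sub>v v) $ (i + q) - complex_of_real a * (?P *\<^sub>v v) $ i"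
      using hankel_shift_rows[where g = "shat a b s" and f = "cseq b s",
          OF shat_cseq_index_below[OF j] j0 w i] Kw by (simp add: H2_def K1_cseq)
    also have "\<dots> = 0"
      using power_col_mult_vec_index[OF v, of "i + q" j] power_col_mult_vec_index[OF v, of i j] i q
      by simp
    finally show "(H2 q a b s (j - 1) *\<^sub>v w) $ i = 0\<^sub>v (j * q) $ i"
      using i by simp
  qed (use H in simp)
  then show ?thesis
    using pos_def_mult_vec_eq_zero[OF _ H w] pos_def_H2[of "j - 1"] j0 j by simp
qed

lemma Gamma1_mult_vec_eq_zero:
  assumes j: "j \<le> n" and v: "v \<in> carrier_vec q"
    and Gv: "Gamma1 q b s j (complex_of_real a) *\<^sub>v v = 0\<^sub>v q"
  shows "v = 0\<^sub>v q"
proof (cases "j = 0")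
  case True
  then show ?thesis
    using Gv v by (simp add: Gamma1_def)
next
  case False
  then have j0: "0 < j"
    by simp
  let ?P = "power_col q j (complex_of_real a)"
  have K: "K1 q b s (j - 1) \<in> carrier_mat (j * q) (j * q)"
    by (rule K1_pred_carrier[OF j0])
  have Y: "Yt1 q b s j \<in> carrier_mat (j * q) q"
    by (simp add: Yt1_cseq)
  have D: "cseq b s (2 * j) \<in> carrier_mat q q"
    using cseq_hermitian[of "2 * j"] j by auto
  have W: "power_col q (j - 1) (complex_of_real a) \<in> carrier_mat (j * q) q"
    using power_col_carrier[of q "j - 1"] j0 by simp
  have detK: "det (K1 q b s (j - 1)) \<noteq> 0"
    using pos_def_det[OF pos_def_K1 K] j by simp
  have "(complex_of_real a ^ j \<cdot>\<^sub>m 1\<^sub>m q - mat_adjoint (Yt1 q b s j) * minv (K1 q b s (j - 1))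
      * power_col q (j - 1) (complex_of_real a)) *\<^sub>v v = 0\<^sub>v q"
    using Gv Gamma1_eq[OF j0 j] by simp
  then obtain w where w: "w \<in> carrier_vec (j * q)" and Kw: "K1 q b s j *\<^sub>v (w @\<^sub>v 0\<^sub>v q) = ?P *\<^sub>v v"
    using schur_complement_kernel[OF K detK Y mat_adjoint_carrier[OF Y] D W
        smult_carrier_mat[OF one_carrier_mat] v]
    unfolding K1_split[OF j0 j] power_col_Suc[OF j0] by blast
  moreover have "0\<^sub>v (j * q) @\<^sub>v 0\<^sub>v q = (0\<^sub>v ((j + 1) * q) :: complex vec)"
    by (rule eq_vecI) auto
  ultimately have "?P *\<^sub>v v = 0\<^sub>v ((j + 1) * q)"
    using K1_eq_power_col_imp_zero[OF j0 j w v] mult_mat_vec_zero[OF K1_carrier[of q b s j]] by simp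
  show ?thesis
  proof (rule eq_vecI)
    fix i
    assume "i < dim_vec (0\<^sub>v q :: complex vec)"
    then show "v $ i = 0\<^sub>v q $ i"
      using power_col_mult_vec_index[OF v, of i j] arg_cong[OF \<open>?P *\<^sub>v v = _\<close>, of "\<lambda>x. x $ i"] by simp
  qed (use v in simp)
qed

lemma Q2_carrier: "j < n \<Longrightarrow> Q2 q a b s j (complex_of_real a) \<in> carrier_mat q q"
  using cseq_hermitian[of 0] minv_H2_carrier[of j]
  by (cases "j = 0") (auto simp: Q2_0 Q2_eq Y2_block_col intro!: minus_carrier_mat mult_carrier_mat)

lemma Gamma1_carrier: "j \<le> n \<Longrightarrow> Gamma1 q b s j (complex_of_real a) \<in> carrier_mat q q"
proof (cases "j = 0")
  case False
  assume "j \<le> n"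
  with False show ?thesis
    using minv_K1_carrier[of j] power_col_carrier[of q "j - 1"]
    by (auto simp: Gamma1_eq Yt1_cseq intro!: minus_carrier_mat mult_carrier_mat)
qed (simp add: Gamma1_def)

lemma H2hat_carrier: "j < n \<Longrightarrow> H2hat q a b s j \<in> carrier_mat q q"
  using shat_hermitian[of 0] minv_H2_carrier[of j] n
  by (cases "j = 0") (auto simp: H2hat_def Y2_block_col intro!: minus_carrier_mat mult_carrier_mat)

lemma K1hat_carrier: "j \<le> n \<Longrightarrow> K1hat q b s j \<in> carrier_mat q q"
  using cseq_hermitian[of 0] minv_K1_carrier[of j]
  by (cases "j = 0") (auto simp: K1hat_def cseq_def Yt1_cseq intro!: minus_carrier_mat mult_carrier_mat)

lemma lam_carrier: "j < n \<Longrightarrow> lam q a b s j \<in> carrier_mat q q"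
  using lam_eq adjoint_congruence_carrier[OF block_col_carrier pos_def_minv_carrier[OF pos_def_H2 H2_carrier]]
  by simp

lemma mu_carrier: "j \<le> n \<Longrightarrow> mu q a b s j \<in> carrier_mat q q"
  using mu_eq adjoint_congruence_carrier[OF power_col_carrier pos_def_minv_carrier[OF pos_def_K1 K1_carrier]]
  by simp

lemma lam_increment:
  assumes j0: "0 < j" and j: "j < n"
  shows "lam q a b s j = lam q a b s (j - 1)
    + mat_adjoint (Q2 q a b s j (complex_of_real a)) * minv (H2hat q a b s j) * Q2 q a b s j (complex_of_real a)"
proof -
  let ?A = "H2 q a b s (j - 1)" and ?B = "Y2 q a b s j" and ?D = "shat a b s (2 * j)"
    and ?x1 = "block_col q j (cseq b s)" and ?x2 = "cseq b s j"
  have A: "?A \<in> carrier_mat (j * q) (j * q)"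
    by (rule H2_pred_carrier[OF j0])
  have B: "?B \<in> carrier_mat (j * q) q"
    by (simp add: Y2_block_col)
  have D: "?D \<in> carrier_mat q q" and x2: "?x2 \<in> carrier_mat q q"
    using shat_hermitian[of "2 * j"] cseq_hermitian[of j] j by auto
  have pd: "pos_def (four_block_mat ?A ?B (mat_adjoint ?B) ?D)"
    using pos_def_H2[OF j] H2_split[OF j0 j] by simp
  have "lam q a b s j = mat_adjoint (?x1 @\<^sub>r ?x2) * minv (four_block_mat ?A ?B (mat_adjoint ?B) ?D)
      * (?x1 @\<^sub>r ?x2)"
    using lam_eq[OF j] H2_split[OF j0 j] block_col_Suc[of "cseq b s" j q, OF x2] by simp
  also have "\<dots> = mat_adjoint ?x1 * minv ?A * ?x1
      + mat_adjoint (Q2 q a b s j (complex_of_real a)) * minv (H2hat q a b s j) * Q2 q a b s j (complex_of_real a)"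
    unfolding schur_quadratic_form[OF A B D pd block_col_carrier x2] Q2_eq[OF j0 j]
    using j0 by (simp add: H2hat_def)
  finally show ?thesis
    using lam_eq[of "j - 1"] j0 j by simp
qed

lemma mu_increment:
  assumes j0: "0 < j" and j: "j \<le> n"
  shows "mu q a b s j = mu q a b s (j - 1)
    + mat_adjoint (Gamma1 q b s j (complex_of_real a)) * minv (K1hat q b s j) * Gamma1 q b s j (complex_of_real a)"
proof -
  let ?A = "K1 q b s (j - 1)" and ?B = "Yt1 q b s j" and ?D = "cseq b s (2 * j)"
    and ?x1 = "power_col q (j - 1) (complex_of_real a)" and ?x2 = "complex_of_real a ^ j \<cdot>\<^sub>m 1\<^sub>m q"
  have A: "?A \<in> carrier_mat (j * q) (j * q)"
    by (rule K1_pred_carrier[OF j0])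
  have B: "?B \<in> carrier_mat (j * q) q"
    by (simp add: Yt1_cseq)
  have D: "?D \<in> carrier_mat q q"
    using cseq_hermitian[of "2 * j"] j by auto
  have x1: "?x1 \<in> carrier_mat (j * q) q"
    using power_col_carrier[of q "j - 1"] j0 by simp
  have pd: "pos_def (four_block_mat ?A ?B (mat_adjoint ?B) ?D)"
    using pos_def_K1[OF j] K1_split[OF j0 j] by simp
  have "mu q a b s j = mat_adjoint (?x1 @\<^sub>r ?x2) * minv (four_block_mat ?A ?B (mat_adjoint ?B) ?D)
      * (?x1 @\<^sub>r ?x2)"
    using mu_eq[OF j] K1_split[OF j0 j] power_col_Suc[OF j0] by simp
  also have "\<dots> = mat_adjoint ?x1 * minv ?A * ?x1
      + mat_adjoint (Gamma1 q b s j (complex_of_real a)) * minv (K1hat q b s j) * Gamma1 q b s j (complex_of_real a)"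
    unfolding schur_quadratic_form[OF A B D pd x1 smult_carrier_mat[OF one_carrier_mat]] Gamma1_eq[OF j0 j]
    using j0 by (simp add: K1hat_def cseq_def)
  finally show ?thesis
    using mu_eq[of "j - 1"] j0 j by simp
qed

lemma lpar_eq:
  assumes j: "j < n"
  shows "lpar q a b s j = mat_adjoint (Q2 q a b s j (complex_of_real a)) * minv (H2hat q a b s j)
    * Q2 q a b s j (complex_of_real a)"
proof (cases "j = 0")
  case True
  have "block_col q 1 (cseq b s) = cseq b s 0"
    by (rule block_col_one) (use cseq_hermitian[of 0] in simp)
  then show ?thesis
    using True lam_eq[of 0] n by (simp add: lpar_def Q2_0 H2hat_def H2_0)
next
  case False
  then show ?thesis
    using lam_increment[of j] add_diff_cancel_left_mat[OF lam_carrier adjoint_congruence_carrier[OF Q2_carrier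
          pos_def_minv_carrier[OF pos_def_H2hat H2hat_carrier]]] j
    by (simp add: lpar_def)
qed

lemma mpar_eq:
  assumes j: "j \<le> n"
  shows "mpar q a b s j = mat_adjoint (Gamma1 q b s j (complex_of_real a)) * minv (K1hat q b s j)
    * Gamma1 q b s j (complex_of_real a)"
proof (cases "j = 0")
  case True
  have "power_col q 0 (complex_of_real a) = 1\<^sub>m q"
    unfolding power_col_def add_0 by (subst block_col_one) (auto intro!: eq_matI)
  moreover have "minv (cseq b s 0) \<in> carrier_mat q q"
    using pos_def_minv_carrier[of "cseq b s 0" q] pos_def_K1[of 0] cseq_hermitian[of 0] by (simp add: K1_0)
  ultimately show ?thesis
    using True mu_eq[of 0] by (simp add: mpar_def Gamma1_def K1hat_def K1_0 cseq_def)
next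
  case False
  then show ?thesis
    using mu_increment[of j] add_diff_cancel_left_mat[OF mu_carrier adjoint_congruence_carrier[OF Gamma1_carrier
          pos_def_minv_carrier[OF pos_def_K1hat K1hat_carrier]]] j
    by (simp add: mpar_def)
qed

lemma pos_def_lpar: "j < n \<Longrightarrow> pos_def (lpar q a b s j)"
  unfolding lpar_eq
  by (rule pos_def_congruence[OF pos_def_minv[OF pos_def_H2hat H2hat_carrier]
        pos_def_minv_carrier[OF pos_def_H2hat H2hat_carrier] Q2_carrier Q2_mult_vec_eq_zero])

lemma pos_def_mpar: "j \<le> n \<Longrightarrow> pos_def (mpar q a b s j)"
  unfolding mpar_eq
  by (rule pos_def_congruence[OF pos_def_minv[OF pos_def_K1hat K1hat_carrier]
        pos_def_minv_carrier[OF pos_def_K1hat K1hat_carrier] Gamma1_carrier Gamma1_mult_vec_eq_zero])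

end

theorem mainTheorem4:
  fixes q n :: nat and a b :: real and s :: "nat \<Rightarrow> complex mat"
  assumes "q \<ge> 1" and "n \<ge> 1" and "a < b"
    and "\<And>j. j \<le> 2*n+1 \<Longrightarrow> s j \<in> carrier_mat q q \<and> hermitian (s j)"
    and "pos_def (H1 q s n)" and "pos_def (H2 q a b s (n-1))"
    and "pos_def (K1 q b s n)" and "pos_def (K2 q a s n)"
  shows "(\<forall>j<n. lpar q a b s j
            = mat_adjoint (Q2 q a b s j (complex_of_real a)) * minv (H2hat q a b s j)
              * Q2 q a b s j (complex_of_real a))
       \<and> (\<forall>j\<le>n. mpar q a b s j
            = mat_adjoint (Gamma1 q b s j (complex_of_real a)) * minv (K1hat q b s j)
              * Gamma1 q b s j (complex_of_real a))
       \<and> (\<forall>j<n. pos_def (lpar q a b s j))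
       \<and> (\<forall>j\<le>n. pos_def (mpar q a b s j))"
proof -
  interpret dsm_standing q n a b s
    using assms by unfold_locales auto
  show ?thesis
    using lpar_eq mpar_eq pos_def_lpar pos_def_mpar by blast
qed

end
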